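(* Let $\Gamma$ be a graph satisfying Assumption (A), and fix an index $j$ of an entry of the trace vector that is not one of the forced-zero entries (i.e. not $B_i$ with $o(e_i)$ of degree one, nor $D_i$ with $\tau(e_i)$ of degree one). Then there exist $\boldsymbol{\ell}\in\mathbb{R}_+^N$ and an eigenpair $(k^2,f)$ of $(\Gamma,\boldsymbol{\ell})$ such that $k^2$ is a non-zero simple eigenvalue, $f$ is not supported on a single loop (if $\Gamma$ has loops), and $(\mathrm{tr}_k(f))_j\neq0$.
   Context: $\Gamma$: finite graph with edges $e_1,\dots,e_N$ oriented from $o(e_j)$ to $\tau(e_j)$; a loop has $o(e_j)=\tau(e_j)$. Assumption (A): connected, no vertex of degree two, some vertex of degree different from two. $(\Gamma,\boldsymbol{\ell})$: $e_j\cong[0,\ell_j]$ ($t=0$ at $o(e_j)$), Laplacian $-d^2/dt^2$ with standard vertex conditions (continuity at vertices and $\sum_{o(e_i)=v}f'|_{e_i}(0)-\sum_{\tau(e_i)=v}f'|_{e_i}(\ell_i)=0$). For an eigenpair with $k>0$: $f|_{e_i}(t)=A_i\cos(kt)+B_i\sin(kt)=C_i\cos(k(\ell_i-t))+D_i\sin(k(\ell_i-t))$; $\mathrm{tr}_k(f)\in\mathbb{C}^{4N}$ collects all $A_i,B_i,C_i,D_i$ ($B_i=f'|_{e_i}(0)/k$, $D_i=-f'|_{e_i}(\ell_i)/k$, which vanish at degree-one vertices). $f$ is supported on a single loop if for some loop $e_i$, $f$ vanishes identically on all other edges. *)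

theory Defs
  imports "HOL-Analysis.Analysis"
begin

text \<open>A finite graph: vertex set V, edges indexed by 0..<N, edge i oriented from
  org i to tgt i (a loop has org i = tgt i).\<close>

definition graph :: "'v set \<Rightarrow> nat \<Rightarrow> (nat \<Rightarrow> 'v) \<Rightarrow> (nat \<Rightarrow> 'v) \<Rightarrow> bool" where
  "graph V N org tgt \<longleftrightarrow> finite V \<and> (\<forall>i<N. org i \<in> V \<and> tgt i \<in> V)"

text \<open>Degree: number of edge ends at v (a loop contributes 2).\<close>
definition degree :: "nat \<Rightarrow> (nat \<Rightarrow> 'v) \<Rightarrow> (nat \<Rightarrow> 'v) \<Rightarrow> 'v \<Rightarrow> nat" where
  "degree N org tgt v = card {i. i < N \<and> org i = v} + card {i. i < N \<and> tgt i = v}"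

definition adj :: "nat \<Rightarrow> (nat \<Rightarrow> 'v) \<Rightarrow> (nat \<Rightarrow> 'v) \<Rightarrow> ('v \<times> 'v) set" where
  "adj N org tgt = {(org i, tgt i) | i. i < N} \<union> {(tgt i, org i) | i. i < N}"

definition connected_graph :: "'v set \<Rightarrow> nat \<Rightarrow> (nat \<Rightarrow> 'v) \<Rightarrow> (nat \<Rightarrow> 'v) \<Rightarrow> bool" where
  "connected_graph V N org tgt \<longleftrightarrow> (\<forall>u\<in>V. \<forall>v\<in>V. (u, v) \<in> (adj N org tgt)\<^sup>*)"

definition assumption_A :: "'v set \<Rightarrow> nat \<Rightarrow> (nat \<Rightarrow> 'v) \<Rightarrow> (nat \<Rightarrow> 'v) \<Rightarrow> bool" where
  "assumption_A V N org tgt \<longleftrightarrow>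
     graph V N org tgt \<and> connected_graph V N org tgt \<and>
     (\<forall>v\<in>V. degree N org tgt v \<noteq> 2) \<and> (\<exists>v\<in>V. degree N org tgt v \<noteq> 2)"

text \<open>A function on the metric graph: f i is the function on edge i, identified with
  [0, l i] (t = 0 at org i). Only the values on [0, l i] matter.
  Derivative along edge i (one-sided at the endpoints).\<close>
definition edge_deriv :: "(nat \<Rightarrow> real) \<Rightarrow> (nat \<Rightarrow> real \<Rightarrow> complex) \<Rightarrow> nat \<Rightarrow> real \<Rightarrow> complex" where
  "edge_deriv l f i t = vector_derivative (f i) (at t within {0..l i})"

definition eigenpair ::
  "'v set \<Rightarrow> nat \<Rightarrow> (nat \<Rightarrow> 'v) \<Rightarrow> (nat \<Rightarrow> 'v) \<Rightarrow> (nat \<Rightarrow> real) \<Rightarrow> real \<Rightarrow> (nat \<Rightarrow> real \<Rightarrow> complex) \<Rightarrow> bool" where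
  "eigenpair V N org tgt l lam f \<longleftrightarrow>
     \<comment> \<open>twice differentiable on each edge, with - f'' = lam f\<close>
     (\<forall>i<N. \<forall>t\<in>{0..l i}.
        (f i has_vector_derivative edge_deriv l f i t) (at t within {0..l i}) \<and>
        ((edge_deriv l f i) has_vector_derivative (- of_real lam * f i t)) (at t within {0..l i})) \<and>
     \<comment> \<open>not identically zero\<close>
     (\<exists>i<N. \<exists>t\<in>{0..l i}. f i t \<noteq> 0) \<and>
     \<comment> \<open>continuity at vertices\<close>
     (\<forall>i<N. \<forall>m<N.
        (org i = org m \<longrightarrow> f i 0 = f m 0) \<and>
        (org i = tgt m \<longrightarrow> f i 0 = f m (l m)) \<and>
        (tgt i = tgt m \<longrightarrow> f i (l i) = f m (l m))) \<and>
     \<comment> \<open>Kirchhoff condition\<close>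
     (\<forall>v\<in>V. (\<Sum>i\<in>{i. i < N \<and> org i = v}. edge_deriv l f i 0)
              - (\<Sum>i\<in>{i. i < N \<and> tgt i = v}. edge_deriv l f i (l i)) = 0)"

definition simple_eigenpair ::
  "'v set \<Rightarrow> nat \<Rightarrow> (nat \<Rightarrow> 'v) \<Rightarrow> (nat \<Rightarrow> 'v) \<Rightarrow> (nat \<Rightarrow> real) \<Rightarrow> real \<Rightarrow> (nat \<Rightarrow> real \<Rightarrow> complex) \<Rightarrow> bool" where
  "simple_eigenpair V N org tgt l lam f \<longleftrightarrow>
     eigenpair V N org tgt l lam f \<and>
     (\<forall>g. eigenpair V N org tgt l lam g \<longrightarrow>
          (\<exists>c::complex. \<forall>i<N. \<forall>t\<in>{0..l i}. g i t = c * f i t))"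

definition supported_on_single_loop ::
  "nat \<Rightarrow> (nat \<Rightarrow> 'v) \<Rightarrow> (nat \<Rightarrow> 'v) \<Rightarrow> (nat \<Rightarrow> real) \<Rightarrow> (nat \<Rightarrow> real \<Rightarrow> complex) \<Rightarrow> bool" where
  "supported_on_single_loop N org tgt l f \<longleftrightarrow>
     (\<exists>i<N. org i = tgt i \<and> (\<forall>m<N. m \<noteq> i \<longrightarrow> (\<forall>t\<in>{0..l m}. f m t = 0)))"

text \<open>Entries of the trace vector tr_k(f) in C^(4N): indexed by a coefficient kind and an
  edge index i < N.\<close>
datatype coeff = CA | CB | CC | CD

definition trace_k :: "(nat \<Rightarrow> real) \<Rightarrow> real \<Rightarrow> (nat \<Rightarrow> real \<Rightarrow> complex) \<Rightarrow> coeff \<times> nat \<Rightarrow> complex" where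
  "trace_k l k f j = (case j of
      (CA, i) \<Rightarrow> f i 0
    | (CB, i) \<Rightarrow> edge_deriv l f i 0 / of_real k
    | (CC, i) \<Rightarrow> f i (l i)
    | (CD, i) \<Rightarrow> - edge_deriv l f i (l i) / of_real k)"

definition admissible_index :: "nat \<Rightarrow> (nat \<Rightarrow> 'v) \<Rightarrow> (nat \<Rightarrow> 'v) \<Rightarrow> coeff \<times> nat \<Rightarrow> bool" where
  "admissible_index N org tgt j \<longleftrightarrow> snd j < N \<and>
     \<not> (fst j = CB \<and> degree N org tgt (org (snd j)) = 1) \<and>
     \<not> (fst j = CD \<and> degree N org tgt (tgt (snd j)) = 1)"

end

theory Submission
  imports Defs
begin

(*
  All vertices have degree 1 or at least 3. If there is no vertex of degree at least 3, the
  graph is a single edge and cos t on an edge of length pi does the job. Otherwise let the core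
  be the set of vertices of degree at least 3, and fix a spanning tree of the core. We look for
  an eigenfunction for k = 1 which equals 1 at every core vertex. Tree edges get length 2 pi,
  so cos t + b sin t fits on them for every slope b. Every other edge i touches the core and
  carries cos t + w_i sin t (or cos t / cos L when it runs from a leaf into the core); its length
  is determined by w_i, through tan(L/2) = w_i for edges inside the core and tan L = w_i for
  pendant edges. Kirchhoff's law at the core then asks for a flow on the tree with prescribed
  divergence, which exists exactly when the weights w_i are balanced, and is unique.

  Simplicity: an eigenfunction is constant on the core since tree edges have length 2 pi; its
  coefficients on the non-tree edges are then forced, and uniqueness of tree flows forces the
  tree slopes. The chosen trace entry is nonzero by construction, except possibly for the slope
  of a tree edge. The tree avoids the edge in question unless it is a bridge of the core, and
  then the weights can be chosen so that the net source on one side of the bridge is nonzero.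
*)

section \<open>Solutions of \<open>f'' = -f\<close> on an edge\<close>

definition harmonic :: "complex \<Rightarrow> complex \<Rightarrow> real \<Rightarrow> complex" where
  "harmonic A B t = A * of_real (cos t) + B * of_real (sin t)"

lemma harmonic_0 [simp]: "harmonic A B 0 = A"
  by (simp add: harmonic_def)

lemma harmonic_2pi [simp]: "harmonic A B (2 * pi) = A"
  by (simp add: harmonic_def)

lemma harmonic_scale: "c * harmonic A B t = harmonic (c * A) (c * B) t"
  by (simp add: harmonic_def algebra_simps)

lemma harmonic_uminus: "harmonic (- A) (- B) t = - harmonic A B t"
  by (simp add: harmonic_def)

lemma harmonic_of_real: "harmonic (of_real a) (of_real b) t = of_real (a * cos t + b * sin t)"
  by (simp add: harmonic_def)

lemma harmonic_cancel:
  "harmonic A B t = harmonic A B' t \<Longrightarrow> sin t \<noteq> 0 \<Longrightarrow> B = B'"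
  "harmonic A B t = harmonic A' B t \<Longrightarrow> cos t \<noteq> 0 \<Longrightarrow> A = A'"
  by (simp_all add: harmonic_def)

lemma harmonic_has_vector_derivative:
  "(harmonic A B has_vector_derivative harmonic B (- A) t) (at t within S)"
  unfolding harmonic_def [abs_def] by (auto intro!: derivative_eq_intros simp: algebra_simps)

text \<open>Uniqueness for \<open>g'' = -g\<close>: the quantities \<open>g cos - g' sin\<close> and \<open>g sin + g' cos\<close>
  have derivative zero, so they keep their values \<open>g 0\<close> and \<open>g' 0\<close>.\<close>
lemma harmonic_unique:
  fixes g g' :: "real \<Rightarrow> complex"
  assumes g: "\<And>t. t \<in> {0..L} \<Longrightarrow> (g has_vector_derivative g' t) (at t within {0..L})"
    and g': "\<And>t. t \<in> {0..L} \<Longrightarrow> (g' has_vector_derivative - g t) (at t within {0..L})"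
    and t: "t \<in> {0..L}"
  shows "g t = harmonic (g 0) (g' 0) t" "g' t = harmonic (g' 0) (- g 0) t"
proof -
  define c s where "c x = complex_of_real (cos x)" and "s x = complex_of_real (sin x)" for x
  have c: "(c has_vector_derivative - s x) (at x within S)"
    and s: "(s has_vector_derivative c x) (at x within S)" for x S
    unfolding c_def [abs_def] s_def [abs_def] by (auto intro!: derivative_eq_intros)
  have conserved: "h t = h 0"
    if deriv: "\<And>x. x \<in> {0..L} \<Longrightarrow> (h has_vector_derivative 0) (at x within {0..L})" for h :: "real \<Rightarrow> complex"
  proof -
    obtain k where "\<And>x. x \<in> {0..L} \<Longrightarrow> h x = k"
      using has_vector_derivative_zero_constant[OF convex_real_interval(5) deriv] by blast
    then show ?thesis using t by simp
  qed
  have "((\<lambda>t. g t * c t - g' t * s t) has_vector_derivative 0) (at x within {0..L})"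
    if "x \<in> {0..L}" for x
    using has_vector_derivative_diff[OF has_vector_derivative_mult[OF g[OF that] c]
        has_vector_derivative_mult[OF g'[OF that] s]]
    by (simp add: algebra_simps)
  from conserved[OF this] have u: "g t * c t - g' t * s t = g 0"
    by (simp add: c_def s_def)
  have "((\<lambda>t. g t * s t + g' t * c t) has_vector_derivative 0) (at x within {0..L})"
    if "x \<in> {0..L}" for x
    using has_vector_derivative_add[OF has_vector_derivative_mult[OF g[OF that] s]
        has_vector_derivative_mult[OF g'[OF that] c]]
    by (simp add: algebra_simps)
  from conserved[OF this] have v: "g t * s t + g' t * c t = g' 0"
    by (simp add: c_def s_def)
  have pythagoras: "c t * c t + s t * s t = 1"
    unfolding c_def s_def by (metis of_real_add of_real_mult of_real_1 sin_cos_squared_add3 add.commute)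
  have "g t = g t * (c t * c t + s t * s t)" "g' t = g' t * (c t * c t + s t * s t)"
    using pythagoras by simp_all
  then have "g t = (g t * c t - g' t * s t) * c t + (g t * s t + g' t * c t) * s t"
    "g' t = - (g t * c t - g' t * s t) * s t + (g t * s t + g' t * c t) * c t"
    by (simp_all add: algebra_simps)
  then show "g t = harmonic (g 0) (g' 0) t" "g' t = harmonic (g' 0) (- g 0) t"
    unfolding u v by (simp_all add: harmonic_def c_def s_def)
qed

lemma edge_deriv_harmonic:
  assumes "0 < l i" "f i = harmonic A B" "t \<in> {0..l i}"
  shows "edge_deriv l f i t = harmonic B (- A) t"
  using vector_derivative_within_cbox[of 0 "l i" t "f i" "harmonic B (- A) t"]
    harmonic_has_vector_derivative assms by (simp add: edge_deriv_def)

lemma harmonic_edge_ode: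
  assumes "0 < l i" "f i = harmonic A B" "t \<in> {0..l i}"
  shows "(f i has_vector_derivative edge_deriv l f i t) (at t within {0..l i})"
    "(edge_deriv l f i has_vector_derivative - f i t) (at t within {0..l i})"
proof -
  have deriv: "edge_deriv l f i x = harmonic B (- A) x" if "x \<in> {0..l i}" for x
    using edge_deriv_harmonic[of l i f A B x, OF assms(1,2) that] .
  show "(f i has_vector_derivative edge_deriv l f i t) (at t within {0..l i})"
    unfolding assms(2) deriv[OF assms(3)] by (rule harmonic_has_vector_derivative)
  have "(harmonic B (- A) has_vector_derivative - f i t) (at t within {0..l i})"
    using harmonic_has_vector_derivative[of B "- A"] unfolding assms(2) harmonic_uminus .
  then show "(edge_deriv l f i has_vector_derivative - f i t) (at t within {0..l i})"
    by (rule has_vector_derivative_transform[OF assms(3) deriv, rotated])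
qed

lemma eigenpair_harmonic:
  assumes "eigenpair V N org tgt l 1 g" "i < N" "t \<in> {0..l i}"
  shows "g i t = harmonic (g i 0) (edge_deriv l g i 0) t"
    "edge_deriv l g i t = harmonic (edge_deriv l g i 0) (- g i 0) t"
proof -
  have "\<forall>t\<in>{0..l i}. (g i has_vector_derivative edge_deriv l g i t) (at t within {0..l i}) \<and>
      (edge_deriv l g i has_vector_derivative - g i t) (at t within {0..l i})"
    using assms(1,2) unfolding eigenpair_def by simp
  then show "g i t = harmonic (g i 0) (edge_deriv l g i 0) t"
    "edge_deriv l g i t = harmonic (edge_deriv l g i 0) (- g i 0) t"
    using harmonic_unique[of "l i" "g i" "edge_deriv l g i" t] assms(3) by blast+
qed

lemma eigenpair_harmonicI:
  assumes len: "\<And>i. i < N \<Longrightarrow> 0 < l i"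
    and f: "\<And>i. i < N \<Longrightarrow> f i = harmonic (A i) (B i)"
    and nonzero: "\<exists>i<N. A i \<noteq> 0"
    and continuity: "\<forall>i<N. \<forall>m<N.
      (org i = org m \<longrightarrow> A i = A m) \<and>
      (org i = tgt m \<longrightarrow> A i = harmonic (A m) (B m) (l m)) \<and>
      (tgt i = tgt m \<longrightarrow> harmonic (A i) (B i) (l i) = harmonic (A m) (B m) (l m))"
    and kirchhoff: "\<forall>v\<in>V.
      (\<Sum>i\<in>{i. i < N \<and> org i = v}. B i) - (\<Sum>i\<in>{i. i < N \<and> tgt i = v}. harmonic (B i) (- A i) (l i)) = 0"
  shows "eigenpair V N org tgt l 1 f"
proof -
  have deriv: "edge_deriv l f i t = harmonic (B i) (- A i) t" if "i < N" "t \<in> {0..l i}" for i t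
    using edge_deriv_harmonic[of l i f "A i" "B i" t, OF len[OF that(1)] f[OF that(1)] that(2)] .
  have ends: "0 \<in> {0..l i}" "l i \<in> {0..l i}" if "i < N" for i
    using len[OF that] by auto
  have endpoints: "f i 0 = A i" "f i (l i) = harmonic (A i) (B i) (l i)"
    "edge_deriv l f i 0 = B i" "edge_deriv l f i (l i) = harmonic (B i) (- A i) (l i)"
    if "i < N" for i
    using f[OF that] deriv[OF that ends(1)[OF that]] deriv[OF that ends(2)[OF that]] by simp_all
  show ?thesis
    unfolding eigenpair_def
  proof (intro conjI allI impI ballI)
    fix i t assume i: "i < N" and t: "t \<in> {0..l i}"
    show "(f i has_vector_derivative edge_deriv l f i t) (at t within {0..l i})"
      "(edge_deriv l f i has_vector_derivative - of_real 1 * f i t) (at t within {0..l i})"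
      using harmonic_edge_ode[of l i f "A i" "B i" t, OF len[OF i] f[OF i] t] by simp_all
  next
    show "\<exists>i<N. \<exists>t\<in>{0..l i}. f i t \<noteq> 0"
      using nonzero endpoints(1) ends(1) by metis
  next
    fix i m assume "i < N" "m < N"
    then show "org i = org m \<Longrightarrow> f i 0 = f m 0" "org i = tgt m \<Longrightarrow> f i 0 = f m (l m)"
      "tgt i = tgt m \<Longrightarrow> f i (l i) = f m (l m)"
      using continuity[rule_format, OF \<open>i < N\<close> \<open>m < N\<close>] by (simp_all only: endpoints)
  next
    fix v assume "v \<in> V"
    have "(\<Sum>i\<in>{i. i < N \<and> org i = v}. edge_deriv l f i 0) = (\<Sum>i\<in>{i. i < N \<and> org i = v}. B i)"
      "(\<Sum>i\<in>{i. i < N \<and> tgt i = v}. edge_deriv l f i (l i))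
        = (\<Sum>i\<in>{i. i < N \<and> tgt i = v}. harmonic (B i) (- A i) (l i))"
      by (auto intro!: sum.cong simp: endpoints)
    then show "(\<Sum>i\<in>{i. i < N \<and> org i = v}. edge_deriv l f i 0)
        - (\<Sum>i\<in>{i. i < N \<and> tgt i = v}. edge_deriv l f i (l i)) = 0"
      using kirchhoff \<open>v \<in> V\<close> by simp
  qed
qed

lemma double_arctan:
  assumes "t \<noteq> 0"
  shows "sin (2 * arctan t) \<noteq> 0" "cos (2 * arctan t) + t * sin (2 * arctan t) = 1"
    "t * cos (2 * arctan t) - sin (2 * arctan t) = - t"
proof -
  define a where "a = arctan t"
  have c: "cos a \<noteq> 0" unfolding a_def by simp
  have t: "t = sin a / cos a" unfolding a_def using tan_arctan[of t] by (simp add: tan_def)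
  have s: "sin a = t * cos a" using t c by simp
  have e: "cos a ^ 2 + (t * cos a) ^ 2 = 1" using sin_cos_squared_add[of a] s by simp
  have S2: "sin (2 * a) = 2 * t * cos a ^ 2" using sin_double[of a] s by (simp add: power2_eq_square)
  have C2: "cos (2 * a) = cos a ^ 2 - t ^ 2 * cos a ^ 2" using cos_double[of a] s by (simp add: power2_eq_square)
  show "sin (2 * arctan t) \<noteq> 0" using S2 assms c unfolding a_def by simp
  show "cos (2 * arctan t) + t * sin (2 * arctan t) = 1" "t * cos (2 * arctan t) - sin (2 * arctan t) = - t"
    unfolding a_def[symmetric] S2 C2 using e by algebra+
qed

text \<open>On an edge of length \<open>chord_length w\<close> the function \<open>cos t + w sin t\<close> takes the value 1 at
  both ends, with derivatives \<open>w\<close> and \<open>-w\<close>.\<close>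
definition chord_length :: "real \<Rightarrow> real" where
  "chord_length w = (if 0 < w then 2 * arctan w else 2 * pi + 2 * arctan w)"

text \<open>On an edge of length \<open>pendant_length w\<close> the function \<open>cos t + w sin t\<close> has derivative
  zero at the far end.\<close>
definition pendant_length :: "real \<Rightarrow> real" where
  "pendant_length w = arctan w + pi"

lemma chord_length:
  assumes "w \<noteq> 0"
  shows "0 < chord_length w" "sin (chord_length w) \<noteq> 0"
    "cos (chord_length w) + w * sin (chord_length w) = 1"
    "w * cos (chord_length w) - sin (chord_length w) = - w"
proof -
  have "sin (chord_length w) = sin (2 * arctan w)" "cos (chord_length w) = cos (2 * arctan w)"
    unfolding chord_length_def by (auto simp: sin_add cos_add)
  then show "sin (chord_length w) \<noteq> 0" "cos (chord_length w) + w * sin (chord_length w) = 1"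
    "w * cos (chord_length w) - sin (chord_length w) = - w"
    using double_arctan[OF assms] by simp_all
  show "0 < chord_length w"
    unfolding chord_length_def using arctan_lbound[of w] pi_gt_zero by (auto; linarith)
qed

lemma pendant_length:
  shows "0 < pendant_length w" "cos (pendant_length w) \<noteq> 0"
    "sin (pendant_length w) = w * cos (pendant_length w)"
proof -
  show "0 < pendant_length w" unfolding pendant_length_def using arctan_lbound[of w] pi_gt_zero by linarith
  show "cos (pendant_length w) \<noteq> 0" unfolding pendant_length_def by (simp add: cos_add)
  have "w = sin (arctan w) / cos (arctan w)" using tan_arctan[of w] by (simp add: tan_def)
  then show "sin (pendant_length w) = w * cos (pendant_length w)"
    unfolding pendant_length_def by (simp add: sin_add cos_add field_simps)
qed

section \<open>Graphs satisfying Assumption (A)\<close>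

lemma sum_eq_single:
  assumes "finite S" "\<And>i. i \<in> S \<Longrightarrow> i \<noteq> a \<Longrightarrow> f i = 0"
  shows "sum f S = (if a \<in> S then f a else 0)"
proof -
  have "sum f S = (\<Sum>i\<in>S. if i = a then f i else 0)"
    by (rule sum.cong) (use assms(2) in auto)
  also have "\<dots> = (if a \<in> S then f a else 0)"
    using sum.delta'[OF assms(1), of a f] by (simp add: eq_commute)
  finally show ?thesis .
qed

lemma sum_over_fibres:
  fixes c :: "nat \<Rightarrow> 'a::comm_semiring_1"
  assumes "finite Q" "finite S"
  shows "(\<Sum>x\<in>S. \<Sum>i\<in>{i\<in>Q. h i = x}. c i) = (\<Sum>i\<in>Q. c i * of_bool (h i \<in> S))"
proof -
  have "(\<Sum>x\<in>S. \<Sum>i\<in>{i\<in>Q. h i = x}. c i) = (\<Sum>x\<in>S. \<Sum>i\<in>Q. if h i = x then c i else 0)"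
    using assms by (simp add: sum.inter_filter)
  also have "\<dots> = (\<Sum>i\<in>Q. \<Sum>x\<in>S. if h i = x then c i else 0)" by (rule sum.swap)
  also have "\<dots> = (\<Sum>i\<in>Q. c i * of_bool (h i \<in> S))"
    using assms by (intro sum.cong) (auto simp: sum.delta)
  finally show ?thesis .
qed

locale graph_A =
  fixes V :: "'v set" and N :: nat and org tgt :: "nat \<Rightarrow> 'v"
  assumes assumption_A: "assumption_A V N org tgt" and edges_nonempty: "0 < N"
begin

abbreviation deg :: "'v \<Rightarrow> nat" where "deg \<equiv> degree N org tgt"

definition core :: "'v set" where "core = {v \<in> V. 3 \<le> deg v}"

definition core_edges :: "nat set" where
  "core_edges = {i. i < N \<and> org i \<in> core \<and> tgt i \<in> core}"

definition edge_rel :: "nat set \<Rightarrow> ('v \<times> 'v) set" where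
  "edge_rel E = {(org i, tgt i) | i. i \<in> E} \<union> {(tgt i, org i) | i. i \<in> E}"

definition connects_core :: "nat set \<Rightarrow> bool" where
  "connects_core E \<longleftrightarrow> (\<forall>u\<in>core. \<forall>v\<in>core. (u, v) \<in> (edge_rel E)\<^sup>*)"

lemma finite_V: "finite V"
  using assumption_A by (simp add: assumption_A_def graph_def)

lemma endpoints_in_V: "i < N \<Longrightarrow> org i \<in> V \<and> tgt i \<in> V"
  using assumption_A by (simp add: assumption_A_def graph_def)

lemma connected: "u \<in> V \<Longrightarrow> v \<in> V \<Longrightarrow> (u, v) \<in> (adj N org tgt)\<^sup>*"
  using assumption_A by (simp add: assumption_A_def connected_graph_def)

lemma finite_core: "finite core"
  using finite_V by (simp add: core_def)

lemma core_subset_V: "core \<subseteq> V"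
  by (auto simp: core_def)

lemma adj_edge: "(x, y) \<in> adj N org tgt \<Longrightarrow> \<exists>i<N. (org i = x \<and> tgt i = y) \<or> (tgt i = x \<and> org i = y)"
  by (auto simp: adj_def)

lemma adj_sym: "(x, y) \<in> adj N org tgt \<Longrightarrow> (y, x) \<in> adj N org tgt"
  by (auto simp: adj_def)

lemma degree_pos_at_endpoint:
  assumes "i < N" "v = org i \<or> v = tgt i"
  shows "1 \<le> deg v"
proof -
  have "finite {i. i < N \<and> h i = v}" for h :: "nat \<Rightarrow> 'v" by simp
  then show ?thesis
    using assms card_gt_0_iff[of "{i. i < N \<and> org i = v}"] card_gt_0_iff[of "{i. i < N \<and> tgt i = v}"]
    by (auto simp: degree_def)
qed

lemma degree_pos: assumes "v \<in> V" shows "1 \<le> deg v"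
proof (cases "v = org 0")
  case True
  then show ?thesis using degree_pos_at_endpoint[OF edges_nonempty] by simp
next
  case False
  have "(v, org 0) \<in> (adj N org tgt)\<^sup>*"
    using connected[OF assms] endpoints_in_V[OF edges_nonempty] by simp
  then obtain y where "(v, y) \<in> adj N org tgt"
    using False by (cases rule: converse_rtranclE) auto
  then show ?thesis using adj_edge degree_pos_at_endpoint by blast
qed

lemma leaf_or_core: "v \<in> V \<Longrightarrow> deg v = 1 \<or> v \<in> core"
  using degree_pos[of v] assumption_A by (auto simp: core_def assumption_A_def)

lemma endpoint_leaf_or_core:
  "i < N \<Longrightarrow> v = org i \<or> v = tgt i \<Longrightarrow> deg v = 1 \<or> v \<in> core"
  using leaf_or_core endpoints_in_V by blast

lemma leaf_edges:
  assumes "deg v = 1" "i < N"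
  shows "org i = v \<Longrightarrow> {m. m < N \<and> org m = v} = {i} \<and> {m. m < N \<and> tgt m = v} = {}"
    and "tgt i = v \<Longrightarrow> {m. m < N \<and> tgt m = v} = {i} \<and> {m. m < N \<and> org m = v} = {}"
proof -
  have card: "card {m. m < N \<and> org m = v} + card {m. m < N \<and> tgt m = v} = 1"
    using assms(1) by (simp add: degree_def)
  have singleton: "A = {i} \<and> B = {}" if "finite A" "finite B" "card A + card B = 1" "i \<in> A"
    for A B :: "nat set"
  proof -
    have "card A \<noteq> 0" using that(1,4) by auto
    then have "card A = 1" "card B = 0" using that(3) by linarith+
    then show ?thesis using that(2,4) by (auto simp: card_1_singleton_iff)
  qed
  show "org i = v \<Longrightarrow> {m. m < N \<and> org m = v} = {i} \<and> {m. m < N \<and> tgt m = v} = {}"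
    using singleton[OF _ _ card] assms(2) by simp
  show "tgt i = v \<Longrightarrow> {m. m < N \<and> tgt m = v} = {i} \<and> {m. m < N \<and> org m = v} = {}"
    using singleton[of "{m. m < N \<and> tgt m = v}" "{m. m < N \<and> org m = v}"] card assms(2) by simp
qed

lemma leaf_edge_unique:
  assumes "deg v = 1" "i < N" "m < N" "v = org i \<or> v = tgt i" "v = org m \<or> v = tgt m"
  shows "m = i \<and> (org m = v \<longleftrightarrow> org i = v)"
proof -
  consider "org i = v" | "tgt i = v" using assms(4) by blast
  then show ?thesis
  proof cases
    case 1
    with leaf_edges(1)[OF assms(1,2)] have "\<And>x. x < N \<Longrightarrow> org x = v \<Longrightarrow> x = i" "\<And>x. x < N \<Longrightarrow> tgt x \<noteq> v"
      by blast+
    then show ?thesis using 1 assms(3,5) by metis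
  next
    case 2
    with leaf_edges(2)[OF assms(1,2)] have "\<And>x. x < N \<Longrightarrow> tgt x = v \<Longrightarrow> x = i" "\<And>x. x < N \<Longrightarrow> org x \<noteq> v"
      by blast+
    then show ?thesis using 2 assms(3,5) by metis
  qed
qed

lemma leaf_at_org:
  assumes "deg (org i) = 1" "i < N"
  shows "\<And>m. m < N \<Longrightarrow> org m = org i \<Longrightarrow> m = i" "\<And>m. m < N \<Longrightarrow> tgt m \<noteq> org i"
  using leaf_edges(1)[OF assms refl] by blast+

lemma leaf_at_tgt:
  assumes "deg (tgt i) = 1" "i < N"
  shows "\<And>m. m < N \<Longrightarrow> tgt m = tgt i \<Longrightarrow> m = i" "\<And>m. m < N \<Longrightarrow> org m \<noteq> tgt i"
  using leaf_edges(2)[OF assms refl] by blast+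

lemma leaf_neighbour_unique:
  assumes "deg x = 1" "(x, y) \<in> adj N org tgt" "(x, z) \<in> adj N org tgt"
  shows "y = z"
proof -
  obtain i where i: "i < N" "(org i = x \<and> tgt i = y) \<or> (tgt i = x \<and> org i = y)"
    using adj_edge[OF assms(2)] by blast
  obtain m where m: "m < N" "(org m = x \<and> tgt m = z) \<or> (tgt m = x \<and> org m = z)"
    using adj_edge[OF assms(3)] by blast
  have "x = org i \<or> x = tgt i" "x = org m \<or> x = tgt m"
    using i(2) m(2) by auto
  then have "m = i \<and> (org m = x \<longleftrightarrow> org i = x)"
    by (rule leaf_edge_unique[OF assms(1) i(1) m(1)])
  then show ?thesis using i(2) m(2) by metis
qed

lemma sum_degree:
  assumes "finite X"
  shows "(\<Sum>v\<in>X. deg v) = card {i. i < N \<and> org i \<in> X} + card {i. i < N \<and> tgt i \<in> X}"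
proof -
  have fibres: "(\<Sum>v\<in>X. card {i. i < N \<and> h i = v}) = card {i. i < N \<and> h i \<in> X}" for h :: "nat \<Rightarrow> 'v"
  proof -
    have "(\<Sum>v\<in>X. card {i. i < N \<and> h i = v})
        = (\<Sum>v\<in>X. \<Sum>i\<in>{x. x \<in> {i. i < N \<and> h i \<in> X} \<and> h x = v}. (1::nat))"
      using assms by (intro sum.cong) (auto intro!: arg_cong[where f = card])
    also have "\<dots> = (\<Sum>i\<in>{i. i < N \<and> h i \<in> X}. (1::nat))"
      by (rule sum.group) (use assms in auto)
    finally show ?thesis by simp
  qed
  show ?thesis unfolding degree_def sum.distrib fibres ..
qed

lemma handshake: "(\<Sum>v\<in>V. deg v) = 2 * N"
proof -
  have "{i. i < N \<and> h i \<in> V} = {..<N}" if "h = org \<or> h = tgt" for h :: "nat \<Rightarrow> 'v"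
    using endpoints_in_V that by auto
  then show ?thesis unfolding sum_degree[OF finite_V] by simp
qed

lemma card_core: "3 * card core \<le> 2 * N"
proof -
  have "3 * card core = (\<Sum>v\<in>core. 3)" by simp
  also have "\<dots> \<le> (\<Sum>v\<in>core. deg v)" by (intro sum_mono) (auto simp: core_def)
  also have "\<dots> \<le> (\<Sum>v\<in>V. deg v)" by (intro sum_mono2 finite_V core_subset_V) auto
  finally show ?thesis using handshake by simp
qed

lemma leaf_edge_component:
  assumes i: "i < N" and leaves: "deg (org i) = 1" "deg (tgt i) = 1"
    and x: "(org i, x) \<in> (adj N org tgt)\<^sup>*"
  shows "x = org i \<or> x = tgt i"
  using x
proof (induction rule: rtrancl_induct)
  case (step y z)
  obtain m where m: "m < N" "(org m = y \<and> tgt m = z) \<or> (tgt m = y \<and> org m = z)"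
    using adj_edge[OF step.hyps(2)] by blast
  have y: "y = org m \<or> y = tgt m" using m(2) by auto
  from step.IH have "m = i"
  proof
    assume "y = org i"
    then show "m = i" using leaf_edge_unique[OF leaves(1) i m(1)] y by simp
  next
    assume "y = tgt i"
    then show "m = i" using leaf_edge_unique[OF leaves(2) i m(1)] y by simp
  qed
  then show ?case using m(2) by auto
qed simp

lemma edge_meets_core:
  assumes "core \<noteq> {}" "i < N" shows "org i \<in> core \<or> tgt i \<in> core"
proof (rule ccontr)
  assume "\<not> ?thesis"
  then have leaves: "deg (org i) = 1" "deg (tgt i) = 1"
    using endpoint_leaf_or_core assms(2) by blast+
  obtain v where v: "v \<in> core" using assms(1) by blast
  have "(org i, v) \<in> (adj N org tgt)\<^sup>*"
    using connected endpoints_in_V[OF assms(2)] v core_subset_V by auto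
  then have "v = org i \<or> v = tgt i" using leaf_edge_component[OF assms(2) leaves] by blast
  then show False using v leaves by (auto simp: core_def)
qed

lemma single_edge:
  assumes "core = {}"
  shows "N = 1" "org 0 \<noteq> tgt 0" "deg (org 0) = 1" "deg (tgt 0) = 1"
proof -
  show leaves: "deg (org 0) = 1" "deg (tgt 0) = 1"
    using endpoint_leaf_or_core[OF edges_nonempty] assms by auto
  show "org 0 \<noteq> tgt 0"
    using leaf_edges(1)[OF leaves(1) edges_nonempty] edges_nonempty by auto
  have "m = 0" if m: "m < N" for m
  proof -
    have "(org 0, org m) \<in> (adj N org tgt)\<^sup>*"
      using connected endpoints_in_V edges_nonempty m by auto
    then have "org m = org 0 \<or> org m = tgt 0"
      using leaf_edge_component[OF edges_nonempty leaves] by blast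
    then show "m = 0"
    proof
      assume "org m = org 0"
      then show "m = 0" using leaf_edge_unique[OF leaves(1) edges_nonempty m] by simp
    next
      assume "org m = tgt 0"
      then show "m = 0" using leaf_edge_unique[OF leaves(2) edges_nonempty m] by simp
    qed
  qed
  then show "N = 1" using edges_nonempty by (metis One_nat_def Suc_lessI lessI less_irrefl)
qed

lemma edge_rel_rtrancl_sym: "(a, b) \<in> (edge_rel E)\<^sup>* \<Longrightarrow> (b, a) \<in> (edge_rel E)\<^sup>*"
  by (rule symD[OF sym_rtrancl]) (auto simp: edge_rel_def sym_def)

lemma connects_core_edges: "connects_core core_edges"
proof -
  txt \<open>Along a path starting in the core, the current vertex is a core vertex reached through
    core edges, or a leaf attached to one.\<close>
  have claim: "x \<in> V \<and> ((x \<in> core \<and> (u, x) \<in> (edge_rel core_edges)\<^sup>*) \<or>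
      (deg x = 1 \<and> (\<exists>y\<in>core. (u, y) \<in> (edge_rel core_edges)\<^sup>* \<and> (x, y) \<in> adj N org tgt)))"
    if u: "u \<in> core" and ux: "(u, x) \<in> (adj N org tgt)\<^sup>*" for u x
    using ux
  proof (induction rule: rtrancl_induct)
    case base then show ?case using u core_subset_V by auto
  next
    case (step x z)
    obtain m where m: "m < N" "(org m = x \<and> tgt m = z) \<or> (tgt m = x \<and> org m = z)"
      using adj_edge[OF step.hyps(2)] by blast
    have zV: "z \<in> V" using m endpoints_in_V by auto
    from step.IH show ?case
    proof (elim conjE disjE)
      assume xc: "x \<in> core" and ux: "(u, x) \<in> (edge_rel core_edges)\<^sup>*"
      show ?thesis
      proof (cases "z \<in> core")
        case True
        then have "(x, z) \<in> edge_rel core_edges"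
          using m xc by (auto simp: core_edges_def edge_rel_def)
        then show ?thesis using True zV ux by (meson rtrancl.rtrancl_into_rtrancl)
      next
        case False
        then show ?thesis using leaf_or_core zV xc ux adj_sym[OF step.hyps(2)] by blast
      qed
    next
      assume "deg x = 1" "\<exists>y\<in>core. (u, y) \<in> (edge_rel core_edges)\<^sup>* \<and> (x, y) \<in> adj N org tgt"
      then show ?thesis using leaf_neighbour_unique step.hyps(2) zV by blast
    qed
  qed
  show ?thesis
    unfolding connects_core_def
  proof (intro ballI)
    fix u v assume u: "u \<in> core" and v: "v \<in> core"
    have "(u, v) \<in> (adj N org tgt)\<^sup>*" using connected u v core_subset_V by auto
    from claim[OF u this] show "(u, v) \<in> (edge_rel core_edges)\<^sup>*" using v by (auto simp: core_def)
  qed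
qed

lemma two_le_N:
  assumes "core \<noteq> {}" shows "2 \<le> N"
proof -
  have "0 < card core" using assms finite_core by (simp add: card_gt_0_iff)
  then show ?thesis using card_core by linarith
qed

lemma continuity_from_core:
  assumes "\<And>i. i < N \<Longrightarrow> org i \<in> core \<Longrightarrow> a i = c" "\<And>i. i < N \<Longrightarrow> tgt i \<in> core \<Longrightarrow> b i = c"
  shows "\<forall>i<N. \<forall>m<N. (org i = org m \<longrightarrow> a i = a m) \<and> (org i = tgt m \<longrightarrow> a i = b m) \<and>
    (tgt i = tgt m \<longrightarrow> b i = b m)"
proof (intro allI impI conjI)
  fix i m assume i: "i < N" and m: "m < N"
  show "a i = a m" if e: "org i = org m"
  proof (cases "org i \<in> core")
    case True
    then show ?thesis using assms(1)[OF i] assms(1)[OF m] e by metis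
  next
    case False
    then have "deg (org i) = 1" using endpoint_leaf_or_core[OF i] by blast
    then have "m = i" using leaf_at_org(1)[OF _ i m] e by metis
    then show ?thesis by simp
  qed
  show "a i = b m" if e: "org i = tgt m"
  proof (cases "org i \<in> core")
    case True
    then show ?thesis using assms(1)[OF i] assms(2)[OF m] e by metis
  next
    case False
    then have "deg (org i) = 1" using endpoint_leaf_or_core[OF i] by blast
    then show ?thesis using leaf_at_org(2)[OF _ i m] e by metis
  qed
  show "b i = b m" if e: "tgt i = tgt m"
  proof (cases "tgt i \<in> core")
    case True
    then show ?thesis using assms(2)[OF i] assms(2)[OF m] e by metis
  next
    case False
    then have "deg (tgt i) = 1" using endpoint_leaf_or_core[OF i] by blast
    then have "m = i" using leaf_at_tgt(1)[OF _ i m] e by metis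
    then show ?thesis by simp
  qed
qed

lemma eigenpair_leaf_slope:
  assumes "eigenpair V N org tgt l lam g" "i < N"
  shows "deg (org i) = 1 \<Longrightarrow> edge_deriv l g i 0 = 0"
    and "deg (tgt i) = 1 \<Longrightarrow> edge_deriv l g i (l i) = 0"
proof -
  have kirchhoff: "(\<Sum>m\<in>{m. m < N \<and> org m = v}. edge_deriv l g m 0)
      - (\<Sum>m\<in>{m. m < N \<and> tgt m = v}. edge_deriv l g m (l m)) = 0" if "v \<in> V" for v
    using assms(1) that unfolding eigenpair_def by blast
  show "edge_deriv l g i 0 = 0" if "deg (org i) = 1"
    using kirchhoff[of "org i"] endpoints_in_V[OF assms(2)]
    unfolding conjunct1[OF leaf_edges(1)[OF that assms(2) refl]] conjunct2[OF leaf_edges(1)[OF that assms(2) refl]]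
    by simp
  show "edge_deriv l g i (l i) = 0" if "deg (tgt i) = 1"
    using kirchhoff[of "tgt i"] endpoints_in_V[OF assms(2)]
    unfolding conjunct1[OF leaf_edges(2)[OF that assms(2) refl]] conjunct2[OF leaf_edges(2)[OF that assms(2) refl]]
    by simp
qed

definition takes_value :: "(nat \<Rightarrow> real) \<Rightarrow> (nat \<Rightarrow> real \<Rightarrow> complex) \<Rightarrow> 'v \<Rightarrow> complex \<Rightarrow> bool" where
  "takes_value l g x c \<longleftrightarrow> (\<forall>i<N. (org i = x \<longrightarrow> g i 0 = c) \<and> (tgt i = x \<longrightarrow> g i (l i) = c))"

lemma eigenpair_takes_value:
  assumes "eigenpair V N org tgt l lam g" "i < N"
  shows "takes_value l g (org i) (g i 0)" "takes_value l g (tgt i) (g i (l i))"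
proof -
  have continuity: "\<forall>i<N. \<forall>m<N. (org i = org m \<longrightarrow> g i 0 = g m 0) \<and>
      (org i = tgt m \<longrightarrow> g i 0 = g m (l m)) \<and> (tgt i = tgt m \<longrightarrow> g i (l i) = g m (l m))"
    using assms(1) unfolding eigenpair_def by (elim conjE) assumption
  show "takes_value l g (org i) (g i 0)"
    unfolding takes_value_def
  proof (intro allI impI conjI)
    fix m assume m: "m < N"
    show "org m = org i \<Longrightarrow> g m 0 = g i 0" using continuity[rule_format, OF m assms(2)] by blast
    show "tgt m = org i \<Longrightarrow> g m (l m) = g i 0" using continuity[rule_format, OF assms(2) m] by metis
  qed
  show "takes_value l g (tgt i) (g i (l i))"
    unfolding takes_value_def
  proof (intro allI impI conjI)
    fix m assume m: "m < N"
    show "org m = tgt i \<Longrightarrow> g m 0 = g i (l i)" using continuity[rule_format, OF m assms(2)] by blast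
    show "tgt m = tgt i \<Longrightarrow> g m (l m) = g i (l i)" using continuity[rule_format, OF m assms(2)] by blast
  qed
qed

lemma takes_value_unique:
  assumes "takes_value l g x c" "i < N" "org i = x \<or> tgt i = x"
  shows "takes_value l g x c' \<longleftrightarrow> c' = c"
  using assms unfolding takes_value_def by metis

lemma vertex_has_edge:
  assumes "v \<in> V" shows "\<exists>i<N. org i = v \<or> tgt i = v"
proof (rule ccontr)
  assume "\<not> ?thesis"
  then have "{i. i < N \<and> org i = v} = {}" "{i. i < N \<and> tgt i = v} = {}" by auto
  then have "deg v = 0" by (simp only: degree_def card.empty add_0)
  then show False using degree_pos[OF assms] by simp
qed

lemma rtrancl_edge_rel_remove:
  assumes "(org e, tgt e) \<in> (edge_rel (E - {e}))\<^sup>*"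
  shows "(edge_rel E)\<^sup>* \<subseteq> (edge_rel (E - {e}))\<^sup>*"
proof (rule rtrancl_subset_rtrancl, rule subsetI)
  fix p assume "p \<in> edge_rel E"
  then obtain i where i: "i \<in> E" "p = (org i, tgt i) \<or> p = (tgt i, org i)" by (auto simp: edge_rel_def)
  show "p \<in> (edge_rel (E - {e}))\<^sup>*"
  proof (cases "i = e")
    case True
    then show ?thesis using i(2) assms edge_rel_rtrancl_sym by blast
  next
    case False
    then have "p \<in> edge_rel (E - {e})" using i by (auto simp: edge_rel_def)
    then show ?thesis by blast
  qed
qed

text \<open>\<open>S\<close> is the set of core vertices reachable from \<open>org e\<close> without crossing \<open>e\<close>.\<close>
lemma bridge_cut:
  assumes e: "e \<in> core_edges" and bridge: "\<not> connects_core (core_edges - {e})"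
  obtains S where "S \<subseteq> core" "org e \<in> S" "tgt e \<notin> S"
    "\<And>i. i \<in> core_edges \<Longrightarrow> i \<noteq> e \<Longrightarrow> org i \<in> S \<longleftrightarrow> tgt i \<in> S"
proof
  let ?R = "edge_rel (core_edges - {e})"
  define S where "S = {x\<in>core. (org e, x) \<in> ?R\<^sup>*}"
  show "S \<subseteq> core" by (auto simp: S_def)
  show "org e \<in> S" using e by (simp add: S_def core_edges_def)
  show "org i \<in> S \<longleftrightarrow> tgt i \<in> S" if "i \<in> core_edges" "i \<noteq> e" for i
  proof -
    have "(org i, tgt i) \<in> ?R" "(tgt i, org i) \<in> ?R" using that by (auto simp: edge_rel_def)
    then show ?thesis using that unfolding S_def core_edges_def by (auto intro: rtrancl_into_rtrancl)
  qed
  show "tgt e \<notin> S"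
  proof
    assume "tgt e \<in> S"
    then have "(edge_rel core_edges)\<^sup>* \<subseteq> ?R\<^sup>*"
      by (intro rtrancl_edge_rel_remove) (simp add: S_def)
    then show False
      using connects_core_edges bridge by (auto simp: connects_core_def)
  qed
qed

end

section \<open>Flows on a spanning tree of the core\<close>

text \<open>A breadth-first spanning tree of the core inside the edge set \<open>E0\<close>: every core vertex
  other than the root is joined to a vertex of smaller depth by its parent edge.\<close>
locale core_tree = graph_A V N org tgt for V :: "'v set" and N org tgt +
  fixes E0 :: "nat set" and root :: 'v
  assumes E0_core: "E0 \<subseteq> core_edges" and E0_connects: "connects_core E0" and root: "root \<in> core"
begin

definition depth :: "'v \<Rightarrow> nat" where
  "depth v = (LEAST n. (root, v) \<in> edge_rel E0 ^^ n)"

definition parent_edge :: "'v \<Rightarrow> nat" where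
  "parent_edge v = (SOME i. i \<in> E0 \<and>
     ((org i = v \<and> Suc (depth (tgt i)) = depth v) \<or> (tgt i = v \<and> Suc (depth (org i)) = depth v)))"

definition other_end :: "nat \<Rightarrow> 'v \<Rightarrow> 'v" where
  "other_end i v = (if org i = v then tgt i else org i)"

definition tree :: "nat set" where "tree = parent_edge ` (core - {root})"

definition tree_div :: "(nat \<Rightarrow> complex) \<Rightarrow> 'v \<Rightarrow> complex" where
  "tree_div \<beta> x = (\<Sum>i\<in>{i\<in>tree. org i = x}. \<beta> i) - (\<Sum>i\<in>{i\<in>tree. tgt i = x}. \<beta> i)"

lemma depth_path: assumes "v \<in> core" shows "(root, v) \<in> edge_rel E0 ^^ depth v"
proof -
  have "(root, v) \<in> (edge_rel E0)\<^sup>*" using E0_connects root assms by (auto simp: connects_core_def)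
  then obtain n where "(root, v) \<in> edge_rel E0 ^^ n" using rtrancl_power by blast
  then show ?thesis unfolding depth_def by (rule LeastI)
qed

lemma depth_le: "(root, v) \<in> edge_rel E0 ^^ n \<Longrightarrow> depth v \<le> n"
  unfolding depth_def by (rule Least_le)

lemma E0_endpoints: "i \<in> E0 \<Longrightarrow> org i \<in> core \<and> tgt i \<in> core \<and> i < N"
  using E0_core by (auto simp: core_edges_def)

lemma parent_edge_exists:
  assumes v: "v \<in> core" "v \<noteq> root"
  shows "parent_edge v \<in> E0 \<and> ((org (parent_edge v) = v \<and> Suc (depth (tgt (parent_edge v))) = depth v) \<or>
           (tgt (parent_edge v) = v \<and> Suc (depth (org (parent_edge v))) = depth v))"
proof -
  have "depth v \<noteq> 0"
    using depth_path[OF v(1)] v(2) by (metis relpow_0_E)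
  then obtain m where m: "depth v = Suc m" using not0_implies_Suc by blast
  have "(root, v) \<in> edge_rel E0 ^^ m O edge_rel E0" using depth_path[OF v(1)] m by simp
  then obtain u where u1: "(root, u) \<in> edge_rel E0 ^^ m" and u2: "(u, v) \<in> edge_rel E0" by blast
  have "(root, u) \<in> edge_rel E0 ^^ depth u" using u1 unfolding depth_def by (rule LeastI)
  then have "(root, v) \<in> edge_rel E0 ^^ Suc (depth u)" using u2 by auto
  then have "Suc (depth u) = depth v" using depth_le[OF u1] depth_le m by fastforce
  moreover obtain i where "i \<in> E0" "(org i = u \<and> tgt i = v) \<or> (tgt i = u \<and> org i = v)"
    using u2 by (auto simp: edge_rel_def)
  ultimately have "\<exists>i. i \<in> E0 \<and> ((org i = v \<and> Suc (depth (tgt i)) = depth v) \<or> (tgt i = v \<and> Suc (depth (org i)) = depth v))"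
    by blast
  then show ?thesis unfolding parent_edge_def by (rule someI_ex)
qed

lemma parent_edge:
  assumes v: "v \<in> core" "v \<noteq> root"
  shows "parent_edge v \<in> E0" "parent_edge v \<in> tree"
    "other_end (parent_edge v) v \<in> core" "Suc (depth (other_end (parent_edge v) v)) = depth v"
    "(org (parent_edge v) = v \<and> tgt (parent_edge v) = other_end (parent_edge v) v) \<or>
     (tgt (parent_edge v) = v \<and> org (parent_edge v) = other_end (parent_edge v) v)"
    "org (parent_edge v) \<noteq> tgt (parent_edge v)"
proof -
  note p = parent_edge_exists[OF v]
  show "parent_edge v \<in> E0" using p by blast
  show "parent_edge v \<in> tree" using v by (simp add: tree_def)
  show "other_end (parent_edge v) v \<in> core" using E0_endpoints p by (simp add: other_end_def)
  show "Suc (depth (other_end (parent_edge v) v)) = depth v"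
    using p unfolding other_end_def by (cases "org (parent_edge v) = v") simp_all
  show "org (parent_edge v) \<noteq> tgt (parent_edge v)"
    using p by (cases "org (parent_edge v) = v") auto
  then show "(org (parent_edge v) = v \<and> tgt (parent_edge v) = other_end (parent_edge v) v) \<or>
     (tgt (parent_edge v) = v \<and> org (parent_edge v) = other_end (parent_edge v) v)"
    using p unfolding other_end_def by auto
qed

lemma tree_subset_E0: "tree \<subseteq> E0"
  unfolding tree_def using parent_edge(1) by blast

lemma tree_edge: "i \<in> tree \<Longrightarrow> i < N \<and> org i \<in> core \<and> tgt i \<in> core \<and> i \<in> core_edges"
  using tree_subset_E0 E0_core E0_endpoints by blast

lemma finite_tree: "finite tree"
  using finite_core by (simp add: tree_def)

lemma inj_on_parent_edge: "inj_on parent_edge (core - {root})"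
proof (rule inj_onI)
  fix v w assume v: "v \<in> core - {root}" and w: "w \<in> core - {root}" and e: "parent_edge v = parent_edge w"
  show "v = w"
  proof (rule ccontr)
    assume "v \<noteq> w"
    then have "other_end (parent_edge v) v = w" "other_end (parent_edge w) w = v"
      using parent_edge(5)[of v] parent_edge(5)[of w] v w e by (auto simp: other_end_def)
    then show False
      using parent_edge(4)[of v] parent_edge(4)[of w] v w by fastforce
  qed
qed

lemma card_tree: "card tree = card core - 1"
  unfolding tree_def card_image[OF inj_on_parent_edge] using root finite_core by simp

lemma tree_edge_parent:
  assumes "i \<in> tree" "x = org i \<or> x = tgt i"
  shows "\<exists>w\<in>core - {root}. i = parent_edge w \<and> (x = w \<or> Suc (depth x) = depth w)"
proof -
  obtain w where w: "w \<in> core - {root}" "i = parent_edge w" using assms(1) by (auto simp: tree_def)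
  then have "x = w \<or> x = other_end (parent_edge w) w"
    using parent_edge(5)[of w] assms(2) by auto
  then show ?thesis using w parent_edge(4)[of w] by auto
qed

lemma tree_induct [consumes 1, case_names root edge]:
  assumes "v \<in> core" "P root" "\<And>i. i \<in> tree \<Longrightarrow> P (org i) \<longleftrightarrow> P (tgt i)"
  shows "P v"
proof -
  have "\<forall>v\<in>core. depth v = n \<longrightarrow> P v" for n
  proof (induction n rule: less_induct)
    case (less n)
    show ?case
    proof (intro ballI impI)
      fix v assume v: "v \<in> core" "depth v = n"
      show "P v"
      proof (cases "v = root")
        case False
        then have "P (other_end (parent_edge v) v)"
          using less parent_edge(3,4)[OF v(1)] v(2) by auto
        then show ?thesis
          using assms(3)[OF parent_edge(2)[OF v(1) False]] parent_edge(5)[OF v(1) False] by auto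
      qed (use assms(2) in simp)
    qed
  qed
  then show ?thesis using assms(1) by blast
qed

lemma tree_div_diff: "tree_div (\<lambda>i. \<beta>1 i - \<beta>2 i) x = tree_div \<beta>1 x - tree_div \<beta>2 x"
  by (simp add: tree_div_def sum_subtractf)

lemma tree_div_scale: "tree_div (\<lambda>i. a * \<beta> i) x = a * tree_div \<beta> x"
  by (simp add: tree_div_def sum_distrib_left right_diff_distrib)

lemma tree_div_cong: "(\<And>i. i \<in> tree \<Longrightarrow> \<beta>1 i = \<beta>2 i) \<Longrightarrow> tree_div \<beta>1 x = tree_div \<beta>2 x"
  unfolding tree_div_def by (intro arg_cong2[where f = minus] sum.cong) auto

lemma tree_div_sum:
  assumes "finite A"
  shows "tree_div (\<lambda>i. \<Sum>v\<in>A. c v * \<phi> v i) x = (\<Sum>v\<in>A. c v * tree_div (\<phi> v) x)"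
  unfolding tree_div_def
  by (simp add: sum.swap[of _ A] sum_distrib_left sum_subtractf right_diff_distrib)

text \<open>Peel off the leaves of the tree in order of decreasing depth.\<close>
lemma tree_div_eq_0_imp:
  assumes div: "\<And>x. x \<in> core \<Longrightarrow> tree_div \<beta> x = 0" and i: "i \<in> tree"
  shows "\<beta> i = 0"
proof -
  define D where "D = Max (depth ` core)"
  have depth_D: "v \<in> core \<Longrightarrow> depth v \<le> D" for v unfolding D_def using finite_core by simp
  have "\<forall>v\<in>core - {root}. D - depth v = n \<longrightarrow> \<beta> (parent_edge v) = 0" for n
  proof (induction n rule: less_induct)
    case (less n)
    show ?case
    proof (intro ballI impI)
      fix v assume v: "v \<in> core - {root}" and n: "D - depth v = n"
      have vv: "v \<in> core" "v \<noteq> root" using v by auto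
      have children: "\<beta> i = 0"
        if i: "i \<in> tree" "i \<noteq> parent_edge v" "org i = v \<or> tgt i = v" for i
      proof -
        obtain w where w: "w \<in> core - {root}" "i = parent_edge w" "v = w \<or> Suc (depth v) = depth w"
          using tree_edge_parent[OF i(1), of v] i(3) by auto
        then have "D - depth w < n" using i(2) n depth_D[of w] by auto
        then show ?thesis using less w by auto
      qed
      have "(\<Sum>i\<in>{i\<in>tree. org i = v}. \<beta> i) = (if org (parent_edge v) = v then \<beta> (parent_edge v) else 0)"
        "(\<Sum>i\<in>{i\<in>tree. tgt i = v}. \<beta> i) = (if tgt (parent_edge v) = v then \<beta> (parent_edge v) else 0)"
        by (subst sum_eq_single[of _ "parent_edge v"]; use finite_tree children parent_edge(2)[OF vv] in auto)+
      then show "\<beta> (parent_edge v) = 0"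
        using div[OF vv(1)] parent_edge(5,6)[OF vv] unfolding tree_div_def by (auto split: if_splits)
    qed
  qed
  moreover obtain v where "v \<in> core - {root}" "i = parent_edge v" using i by (auto simp: tree_def)
  ultimately show ?thesis by blast
qed

lemma tree_div_add_indicator:
  assumes "e \<in> tree"
  shows "tree_div (\<lambda>i. \<phi> i + c * of_bool (i = e)) x = tree_div \<phi> x + c * (of_bool (x = org e) - of_bool (x = tgt e))"
proof -
  have "(\<Sum>i\<in>{i\<in>tree. h i = x}. c * of_bool (i = e)) = c * of_bool (x = h e)" for h :: "nat \<Rightarrow> 'v"
  proof -
    have "(\<Sum>i\<in>{i\<in>tree. h i = x}. c * of_bool (i = e)) = (\<Sum>i\<in>{i\<in>tree. h i = x}. if i = e then c else 0)"
      by (intro sum.cong) auto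
    also have "\<dots> = c * of_bool (x = h e)"
      using assms finite_tree by (auto simp: sum.delta)
    finally show ?thesis .
  qed
  then show ?thesis
    unfolding tree_div_def sum.distrib by (simp add: right_diff_distrib)
qed

lemma tree_div_unit_flow:
  assumes "v \<in> core"
  shows "\<exists>\<phi>. \<forall>x. tree_div \<phi> x = of_bool (x = v) - of_bool (x = root)"
  using assms
proof (induction rule: tree_induct)
  case root
  show ?case by (rule exI[of _ "\<lambda>_. 0"]) (simp add: tree_div_def)
next
  case (edge e)
  show ?case
  proof
    assume "\<exists>\<phi>. \<forall>x. tree_div \<phi> x = of_bool (x = org e) - of_bool (x = root)"
    then obtain \<phi> where \<phi>: "\<forall>x. tree_div \<phi> x = of_bool (x = org e) - of_bool (x = root)" ..
    have "\<forall>x. tree_div (\<lambda>i. \<phi> i + (- 1) * of_bool (i = e)) x = of_bool (x = tgt e) - of_bool (x = root)"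
      unfolding tree_div_add_indicator[OF edge] using \<phi> by simp
    then show "\<exists>\<phi>. \<forall>x. tree_div \<phi> x = of_bool (x = tgt e) - of_bool (x = root)" by blast
  next
    assume "\<exists>\<phi>. \<forall>x. tree_div \<phi> x = of_bool (x = tgt e) - of_bool (x = root)"
    then obtain \<phi> where \<phi>: "\<forall>x. tree_div \<phi> x = of_bool (x = tgt e) - of_bool (x = root)" ..
    have "\<forall>x. tree_div (\<lambda>i. \<phi> i + 1 * of_bool (i = e)) x = of_bool (x = org e) - of_bool (x = root)"
      unfolding tree_div_add_indicator[OF edge] using \<phi> by simp
    then show "\<exists>\<phi>. \<forall>x. tree_div \<phi> x = of_bool (x = org e) - of_bool (x = root)" by blast
  qed
qed

lemma tree_div_surj:
  assumes "(\<Sum>x\<in>core. \<tau> x) = 0"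
  shows "\<exists>\<beta>. \<forall>x\<in>core. tree_div \<beta> x = \<tau> x"
proof -
  obtain \<Phi> where \<Phi>: "\<forall>v\<in>core. \<forall>x. tree_div (\<Phi> v) x = of_bool (x = v) - of_bool (x = root)"
    using tree_div_unit_flow by metis
  have "tree_div (\<lambda>i. \<Sum>v\<in>core. \<tau> v * \<Phi> v i) x = \<tau> x" if x: "x \<in> core" for x
  proof -
    have "tree_div (\<lambda>i. \<Sum>v\<in>core. \<tau> v * \<Phi> v i) x = (\<Sum>v\<in>core. \<tau> v * (of_bool (x = v) - of_bool (x = root)))"
      using \<Phi> by (simp add: tree_div_sum[OF finite_core])
    also have "\<dots> = (\<Sum>v\<in>core. (if v = x then \<tau> v else 0) - of_bool (x = root) * \<tau> v)"
      by (intro sum.cong) auto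
    also have "\<dots> = (\<Sum>v\<in>core. if v = x then \<tau> v else 0) - of_bool (x = root) * (\<Sum>v\<in>core. \<tau> v)"
      by (simp add: sum_subtractf sum_distrib_left)
    also have "\<dots> = \<tau> x" using assms x finite_core by (simp add: sum.delta')
    finally show ?thesis .
  qed
  then show ?thesis by blast
qed

lemma sum_tree_div:
  assumes "finite S"
  shows "(\<Sum>x\<in>S. tree_div \<beta> x) = (\<Sum>i\<in>tree. \<beta> i * (of_bool (org i \<in> S) - of_bool (tgt i \<in> S)))"
  unfolding tree_div_def sum_subtractf sum_over_fibres[OF finite_tree assms]
  by (simp add: right_diff_distrib sum_subtractf)

lemma card_tree_edges_within:
  assumes X: "X \<subseteq> core" "X \<noteq> {}"
  shows "card {i\<in>tree. org i \<in> X \<and> tgt i \<in> X} \<le> card X - 1"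
proof -
  have fX: "finite X" using X finite_core finite_subset by blast
  define m where "m = Min (depth ` X)"
  have "m \<in> depth ` X" unfolding m_def using fX X by (intro Min_in) auto
  then obtain s0 where s0: "s0 \<in> X" "depth s0 = m" by blast
  have "{i\<in>tree. org i \<in> X \<and> tgt i \<in> X} \<subseteq> parent_edge ` (X - {s0})"
  proof
    fix i assume i: "i \<in> {i\<in>tree. org i \<in> X \<and> tgt i \<in> X}"
    obtain w where w: "w \<in> core" "w \<noteq> root" "i = parent_edge w" using i by (auto simp: tree_def)
    have "w \<in> X" "other_end i w \<in> X"
      using parent_edge(5)[OF w(1,2)] i w(3) by auto
    moreover have "w \<noteq> s0"
      using parent_edge(4)[OF w(1,2)] Min_le[of "depth ` X"] fX s0 \<open>other_end i w \<in> X\<close> w(3)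
      unfolding m_def by fastforce
    ultimately show "i \<in> parent_edge ` (X - {s0})" using w(3) by auto
  qed
  then have "card {i\<in>tree. org i \<in> X \<and> tgt i \<in> X} \<le> card (parent_edge ` (X - {s0}))"
    by (intro card_mono) (use fX in auto)
  also have "\<dots> \<le> card (X - {s0})" by (rule card_image_le) (use fX in auto)
  also have "\<dots> = card X - 1" using s0 fX by simp
  finally show ?thesis .
qed

section \<open>Balanced weights\<close>

definition cotree :: "nat set" where "cotree = {i. i < N \<and> i \<notin> tree}"

definition source :: "(nat \<Rightarrow> real) \<Rightarrow> 'v \<Rightarrow> complex" where
  "source w x = (\<Sum>i\<in>{i\<in>cotree. org i = x}. of_real (w i)) + (\<Sum>i\<in>{i\<in>cotree. tgt i = x}. of_real (w i))"

lemma finite_cotree: "finite cotree"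
  by (simp add: cotree_def)

lemma tree_or_cotree: "i < N \<Longrightarrow> i \<in> tree \<or> i \<in> cotree"
  by (auto simp: cotree_def)

lemma cotree_cases:
  assumes "i \<in> cotree"
  obtains (chord) "i \<in> core_edges" | (out) "org i \<in> core" "tgt i \<notin> core" | (into) "org i \<notin> core" "tgt i \<in> core"
  using edge_meets_core[of i] root assms by (auto simp: cotree_def core_edges_def)

lemma sum_source:
  assumes "finite S"
  shows "(\<Sum>x\<in>S. source w x) = of_real (\<Sum>i\<in>cotree. w i * (of_bool (org i \<in> S) + of_bool (tgt i \<in> S)))"
proof -
  have "complex_of_real (of_bool P) = of_bool P" for P by (cases P) simp_all
  then show ?thesis
    unfolding source_def sum.distrib sum_over_fibres[OF finite_cotree assms]
    by (simp add: distrib_left sum.distrib)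
qed

lemma card_cotree: "2 \<le> card cotree"
proof -
  have "cotree = {..<N} - tree" using tree_edge by (auto simp: cotree_def)
  then have "card cotree = N - card tree" using tree_edge finite_tree by (simp add: card_Diff_subset subsetI)
  moreover have "0 < card core" using root finite_core by (auto simp: card_gt_0_iff)
  ultimately show ?thesis using card_tree card_core by linarith
qed

text \<open>Every cotree edge touches the core, so the weight 1 on \<open>Q\<close> can be balanced by a negative
  constant weight on the rest of the cotree.\<close>
lemma balanced_weights:
  assumes Q: "Q \<subseteq> cotree" "Q \<noteq> {}" "cotree - Q \<noteq> {}"
  obtains w where "\<And>i. i \<in> cotree \<Longrightarrow> w i \<noteq> 0" "\<And>i. i \<in> Q \<Longrightarrow> w i = 1"
    "(\<Sum>x\<in>core. source w x) = 0"
proof -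
  define m :: "nat \<Rightarrow> real" where "m i = of_bool (org i \<in> core) + of_bool (tgt i \<in> core)" for i
  have m: "0 < m i" if "i \<in> cotree" for i
    using edge_meets_core[of i] root that by (auto simp: m_def cotree_def)
  have fin: "finite Q" "finite (cotree - Q)" using Q finite_cotree finite_subset by auto
  have pos: "0 < sum m Q" "0 < sum m (cotree - Q)" using fin Q m by (auto intro!: sum_pos)
  define w where "w i = (if i \<in> Q then 1 else - sum m Q / sum m (cotree - Q))" for i
  have "(\<Sum>i\<in>cotree. w i * m i) = (\<Sum>i\<in>Q. w i * m i) + (\<Sum>i\<in>cotree - Q. w i * m i)"
    using sum.subset_diff[OF Q(1) finite_cotree] by (simp add: add.commute)
  also have "(\<Sum>i\<in>Q. w i * m i) = sum m Q" by (simp add: w_def)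
  also have "(\<Sum>i\<in>cotree - Q. w i * m i) = - sum m Q / sum m (cotree - Q) * sum m (cotree - Q)"
    by (simp add: w_def sum_distrib_left)
  also have "sum m Q + \<dots> = 0" using pos by simp
  finally have "(\<Sum>x\<in>core. source w x) = 0"
    using sum_source[OF finite_core, of w] by (simp add: m_def)
  moreover have "w i \<noteq> 0" for i using pos by (simp add: w_def)
  ultimately show ?thesis by (intro that[of w]) (simp_all add: w_def)
qed

lemma exists_balanced_weights:
  obtains w where "\<And>i. i \<in> cotree \<Longrightarrow> w i \<noteq> 0" "(\<Sum>x\<in>core. source w x) = 0"
proof -
  have "cotree \<noteq> {}" using card_cotree by auto
  then obtain q where q: "q \<in> cotree" by blast
  have "1 \<le> card (cotree - {q})" using card_cotree finite_cotree q by simp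
  then have "cotree - {q} \<noteq> {}" by (metis card.empty not_one_le_zero)
  then show ?thesis using balanced_weights[of "{q}"] q that by blast
qed

text \<open>Degree counting: the vertices of \<open>X\<close> have degree at least 3, but at most \<open>card X - 1\<close>
  tree edges join two of them.\<close>
lemma cotree_meets_closed_set:
  assumes X: "X \<subseteq> core" "X \<noteq> {}" and e: "e \<in> tree"
    and closed: "\<And>i. i \<in> core_edges \<Longrightarrow> i \<noteq> e \<Longrightarrow> org i \<in> X \<longleftrightarrow> tgt i \<in> X"
  shows "\<exists>i\<in>cotree. org i \<in> X \<or> tgt i \<in> X"
proof (rule ccontr)
  assume none: "\<not> ?thesis"
  have fX: "finite X" using X finite_core finite_subset by blast
  define B where "B = {i\<in>tree. org i \<in> X \<and> tgt i \<in> X}"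
  have "finite B" using finite_tree by (simp add: B_def)
  have sub: "{i. i < N \<and> h i \<in> X} \<subseteq> insert e B" if "h = org \<or> h = tgt" for h
  proof
    fix i assume i: "i \<in> {i. i < N \<and> h i \<in> X}"
    then have "i \<in> tree" using none that tree_or_cotree by auto
    then show "i \<in> insert e B" using closed[of i] tree_edge i that by (auto simp: B_def)
  qed
  have ends: "card {i. i < N \<and> h i \<in> X} \<le> card B + 1" if "h = org \<or> h = tgt" for h
  proof -
    have "card {i. i < N \<and> h i \<in> X} \<le> card (insert e B)"
      using sub[OF that] \<open>finite B\<close> by (intro card_mono) auto
    also have "\<dots> \<le> card B + 1" using \<open>finite B\<close> by (simp add: card_insert_if)
    finally show ?thesis .
  qed
  moreover have cardX: "card B \<le> card X - 1" "0 < card X"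
    using card_tree_edges_within[OF X] X(2) fX by (auto simp: B_def card_gt_0_iff)
  then have "(\<Sum>v\<in>X. deg v) \<le> 2 * card X"
    unfolding sum_degree[OF fX] using ends[of org] ends[of tgt] by simp
  moreover have "3 * card X \<le> (\<Sum>v\<in>X. deg v)"
  proof -
    have "3 * card X = (\<Sum>v\<in>X. 3)" by simp
    also have "\<dots> \<le> (\<Sum>v\<in>X. deg v)" using X(1) by (intro sum_mono) (auto simp: core_def)
    finally show ?thesis .
  qed
  ultimately show False using cardX(2) by linarith
qed

lemma flow_through_cut:
  assumes "finite S" "e \<in> tree" "org e \<in> S" "tgt e \<notin> S"
    and closed: "\<And>i. i \<in> tree \<Longrightarrow> i \<noteq> e \<Longrightarrow> org i \<in> S \<longleftrightarrow> tgt i \<in> S"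
  shows "(\<Sum>x\<in>S. tree_div \<beta> x) = \<beta> e"
proof -
  have "(\<Sum>x\<in>S. tree_div \<beta> x) = (\<Sum>i\<in>tree. \<beta> i * (of_bool (org i \<in> S) - of_bool (tgt i \<in> S)))"
    by (rule sum_tree_div[OF assms(1)])
  also have "\<dots> = \<beta> e"
    using closed assms(2-4) finite_tree by (subst sum_eq_single[of _ e]) auto
  finally show ?thesis .
qed

text \<open>With weights positive on the cotree edges meeting one side of the bridge, the net source on
  that side is nonzero, and all of it has to flow through the bridge.\<close>
lemma bridge_weights:
  assumes e: "e \<in> tree" and bridge: "\<not> connects_core (core_edges - {e})"
  obtains w where "\<And>i. i \<in> cotree \<Longrightarrow> w i \<noteq> 0" "(\<Sum>x\<in>core. source w x) = 0"
    "\<And>\<beta>. (\<And>x. x \<in> core \<Longrightarrow> tree_div \<beta> x = - source w x) \<Longrightarrow> \<beta> e \<noteq> 0"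
proof -
  obtain S where S: "S \<subseteq> core" "org e \<in> S" "tgt e \<notin> S"
    and closed: "\<And>i. i \<in> core_edges \<Longrightarrow> i \<noteq> e \<Longrightarrow> org i \<in> S \<longleftrightarrow> tgt i \<in> S"
    using bridge_cut[OF _ bridge] tree_edge[OF e] by blast
  have fS: "finite S" using S(1) finite_core finite_subset by blast
  have closed': "org i \<in> core - S \<longleftrightarrow> tgt i \<in> core - S" if "i \<in> core_edges" "i \<noteq> e" for i
    using closed[OF that] that(1) by (auto simp: core_edges_def)
  define Q where "Q = {i\<in>cotree. org i \<in> S \<or> tgt i \<in> S}"
  obtain q2 where q2: "q2 \<in> cotree" "org q2 \<in> core - S \<or> tgt q2 \<in> core - S"
    using cotree_meets_closed_set[of "core - S", OF _ _ e closed'] S tree_edge[OF e] by blast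
  have "q2 \<notin> Q"
  proof
    assume "q2 \<in> Q"
    then have "q2 \<in> core_edges" "q2 \<noteq> e" using q2 S(1) e by (auto simp: Q_def cotree_def core_edges_def)
    then show False using closed \<open>q2 \<in> Q\<close> q2 by (auto simp: Q_def)
  qed
  moreover have "Q \<noteq> {}"
    using cotree_meets_closed_set[OF S(1) _ e closed] S(2) by (auto simp: Q_def)
  ultimately obtain w where w: "\<And>i. i \<in> cotree \<Longrightarrow> w i \<noteq> 0" "\<And>i. i \<in> Q \<Longrightarrow> w i = 1"
    "(\<Sum>x\<in>core. source w x) = 0"
    using balanced_weights[of Q] q2(1) by (auto simp: Q_def)
  define mS :: "nat \<Rightarrow> real" where "mS i = of_bool (org i \<in> S) + of_bool (tgt i \<in> S)" for i
  have "(\<Sum>i\<in>cotree. w i * mS i) = (\<Sum>i\<in>Q. mS i)"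
    using w(2) finite_cotree by (intro sum.mono_neutral_cong_right) (auto simp: Q_def mS_def)
  also have "\<dots> > 0"
    using \<open>Q \<noteq> {}\<close> finite_cotree by (intro sum_pos) (auto simp: Q_def mS_def)
  finally have "0 < (\<Sum>i\<in>cotree. w i * mS i)" .
  moreover have "(\<Sum>x\<in>S. source w x) = of_real (\<Sum>i\<in>cotree. w i * mS i)"
    unfolding sum_source[OF fS] mS_def ..
  ultimately have source_S: "(\<Sum>x\<in>S. source w x) \<noteq> 0"
    by (metis of_real_eq_0_iff less_irrefl)
  have "\<beta> e \<noteq> 0" if kirchhoff: "\<And>x. x \<in> core \<Longrightarrow> tree_div \<beta> x = - source w x" for \<beta>
  proof -
    have "\<beta> e = (\<Sum>x\<in>S. tree_div \<beta> x)"
      using flow_through_cut[OF fS e S(2,3)] closed tree_edge by simp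
    also have "\<dots> = - (\<Sum>x\<in>S. source w x)"
      unfolding sum_negf[symmetric] using kirchhoff S(1) by (intro sum.cong) auto
    finally show ?thesis using source_S by simp
  qed
  then show ?thesis using that w by blast
qed

section \<open>The eigenfunction\<close>

text \<open>The candidate eigenfunction for the eigenvalue 1 is \<open>cos t + amp_sin sin t\<close> on the edges
  starting in the core and \<open>cos t / cos L\<close> on a pendant edge of length \<open>L\<close> ending in the core, so
  it equals 1 at every core vertex. Tree edges have length \<open>2 pi\<close>, which leaves their slopes
  \<open>\<beta>\<close> free; on the other edges the slope \<open>w\<close> determines the length.\<close>
definition edge_len :: "(nat \<Rightarrow> real) \<Rightarrow> nat \<Rightarrow> real" where
  "edge_len w i = (if i \<in> tree then 2 * pi
     else if i \<in> core_edges then chord_length (w i) else pendant_length (w i))"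

definition amp_cos :: "(nat \<Rightarrow> real) \<Rightarrow> nat \<Rightarrow> complex" where
  "amp_cos w i = (if i \<in> tree \<or> org i \<in> core then 1 else of_real (1 / cos (edge_len w i)))"

definition amp_sin :: "(nat \<Rightarrow> real) \<Rightarrow> (nat \<Rightarrow> complex) \<Rightarrow> nat \<Rightarrow> complex" where
  "amp_sin w \<beta> i = (if i \<in> tree then \<beta> i else if org i \<in> core then of_real (w i) else 0)"

definition eigfun :: "(nat \<Rightarrow> real) \<Rightarrow> (nat \<Rightarrow> complex) \<Rightarrow> nat \<Rightarrow> real \<Rightarrow> complex" where
  "eigfun w \<beta> i = harmonic (amp_cos w i) (amp_sin w \<beta> i)"

end

locale weighted_core_tree = core_tree V N org tgt E0 root
  for V :: "'v set" and N org tgt E0 root +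
  fixes w :: "nat \<Rightarrow> real"
  assumes weights_nonzero: "i \<in> cotree \<Longrightarrow> w i \<noteq> 0"
begin

lemma edge_len_pos: "0 < edge_len w i"
  using chord_length(1) pendant_length(1) weights_nonzero pi_gt_zero
  by (auto simp: edge_len_def cotree_def core_edges_def)

lemma start_value: "org i \<in> core \<Longrightarrow> amp_cos w i = 1"
  by (simp add: amp_cos_def)

lemma end_value:
  assumes "i < N" "tgt i \<in> core"
  shows "harmonic (amp_cos w i) (amp_sin w \<beta> i) (edge_len w i) = 1"
proof (cases "i \<in> tree")
  case False
  then have i: "i \<in> cotree" using assms(1) by (simp add: cotree_def)
  show ?thesis
  proof (cases "i \<in> core_edges")
    case True
    then show ?thesis
      using chord_length(3)[OF weights_nonzero[OF i]] False
      by (simp add: amp_cos_def amp_sin_def edge_len_def core_edges_def harmonic_def flip: of_real_mult of_real_add)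
  next
    case False
    then have "org i \<notin> core" using assms by (simp add: core_edges_def)
    then show ?thesis
      using pendant_length(2)[of "w i"] \<open>i \<notin> tree\<close> False
      by (simp add: amp_cos_def amp_sin_def edge_len_def harmonic_def flip: of_real_mult)
  qed
qed (simp add: amp_cos_def amp_sin_def edge_len_def)

lemma start_slope_cotree: "i \<in> cotree \<Longrightarrow> org i \<in> core \<Longrightarrow> amp_sin w \<beta> i = w i"
  by (simp add: amp_sin_def cotree_def)

lemma end_slope_cotree:
  assumes i: "i \<in> cotree" and "tgt i \<in> core"
  shows "harmonic (amp_sin w \<beta> i) (- amp_cos w i) (edge_len w i) = - w i"
proof (cases "i \<in> core_edges")
  case True
  then show ?thesis
    using chord_length(4)[OF weights_nonzero[OF i]] i
    by (simp add: amp_cos_def amp_sin_def edge_len_def core_edges_def cotree_def harmonic_def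
        flip: of_real_mult of_real_add of_real_minus of_real_diff)
next
  case False
  then have "org i \<notin> core" using assms by (simp add: core_edges_def cotree_def)
  moreover have "of_real (1 / cos (pendant_length (w i))) * of_real (sin (pendant_length (w i))) = complex_of_real (w i)"
  proof -
    have "1 / cos (pendant_length (w i)) * sin (pendant_length (w i)) = w i"
      using pendant_length(2,3)[of "w i"] by (simp add: field_simps)
    then show ?thesis by (metis of_real_mult)
  qed
  ultimately show ?thesis
    using i False by (simp add: amp_cos_def amp_sin_def edge_len_def cotree_def harmonic_def)
qed

lemma end_slope_tree: "i \<in> tree \<Longrightarrow> harmonic (amp_sin w \<beta> i) (- amp_cos w i) (edge_len w i) = \<beta> i"
  by (simp add: amp_cos_def amp_sin_def edge_len_def)

lemma start_slope_leaf: "i < N \<Longrightarrow> org i \<notin> core \<Longrightarrow> amp_sin w \<beta> i = 0"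
  using tree_edge by (auto simp: amp_sin_def)

lemma end_slope_leaf:
  assumes "i < N" "tgt i \<notin> core"
  shows "harmonic (amp_sin w \<beta> i) (- amp_cos w i) (edge_len w i) = 0"
proof -
  have i: "i \<in> cotree" "i \<notin> core_edges" using assms tree_edge by (auto simp: cotree_def core_edges_def)
  then have "org i \<in> core" using assms(2) by (cases rule: cotree_cases) auto
  then show ?thesis
    using i pendant_length(3)[of "w i"]
    by (simp add: amp_cos_def amp_sin_def edge_len_def cotree_def harmonic_def flip: of_real_mult)
qed

lemma amp_cos_nonzero: "amp_cos w i \<noteq> 0"
  using pendant_length(2) by (auto simp: amp_cos_def edge_len_def core_edges_def)

lemma end_value_leaf_nonzero:
  assumes "i < N" "tgt i \<notin> core"
  shows "harmonic (amp_cos w i) (amp_sin w \<beta> i) (edge_len w i) \<noteq> 0"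
proof -
  have i: "i \<in> cotree" "i \<notin> core_edges" using assms tree_edge by (auto simp: cotree_def core_edges_def)
  then have "org i \<in> core" using assms(2) by (cases rule: cotree_cases) auto
  define L where "L = pendant_length (w i)"
  have "cos L + w i * sin L = (1 + (w i)\<^sup>2) * cos L"
    using pendant_length(3)[of "w i"] by (simp add: L_def algebra_simps power2_eq_square)
  moreover have "0 < 1 + (w i)\<^sup>2" by (simp add: add_pos_nonneg)
  ultimately have "cos L + w i * sin L \<noteq> 0"
    using pendant_length(2)[of "w i"] by (simp add: L_def)
  then have "harmonic 1 (of_real (w i)) L \<noteq> 0"
    using harmonic_of_real[of 1 "w i" L] by (metis of_real_1 of_real_eq_0_iff mult_1)
  then show ?thesis
    using i \<open>org i \<in> core\<close> by (simp add: amp_cos_def amp_sin_def edge_len_def cotree_def L_def)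
qed

lemma kirchhoff_sum_core:
  assumes cotree: "\<And>i. i \<in> cotree \<Longrightarrow> A i = c * amp_cos w i \<and> B i = c * amp_sin w \<beta> i"
    and tree: "\<And>i. i \<in> tree \<Longrightarrow> A i = c"
    and x: "x \<in> core"
  shows "(\<Sum>i\<in>{i. i < N \<and> org i = x}. B i)
       - (\<Sum>i\<in>{i. i < N \<and> tgt i = x}. harmonic (B i) (- A i) (edge_len w i))
       = tree_div B x + c * source w x"
proof -
  have split: "{i. i < N \<and> h i = x} = {i\<in>tree. h i = x} \<union> {i\<in>cotree. h i = x}"
    and disjoint: "{i\<in>tree. h i = x} \<inter> {i\<in>cotree. h i = x} = {}"
    and finite: "finite {i\<in>tree. h i = x}" "finite {i\<in>cotree. h i = x}" for h :: "nat \<Rightarrow> 'v"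
    using tree_edge finite_tree finite_cotree by (auto simp: cotree_def)
  have out: "(\<Sum>i\<in>{i\<in>cotree. org i = x}. B i) = c * (\<Sum>i\<in>{i\<in>cotree. org i = x}. of_real (w i))"
    unfolding sum_distrib_left using cotree start_slope_cotree x by (intro sum.cong) auto
  have "harmonic (B i) (- A i) (edge_len w i) = - c * of_real (w i)" if "i \<in> cotree" "tgt i = x" for i
  proof -
    have "harmonic (B i) (- A i) (edge_len w i) = c * harmonic (amp_sin w \<beta> i) (- amp_cos w i) (edge_len w i)"
      using cotree[OF that(1)] by (simp add: harmonic_scale)
    then show ?thesis using end_slope_cotree[OF that(1)] that(2) x by simp
  qed
  then have into: "(\<Sum>i\<in>{i\<in>cotree. tgt i = x}. harmonic (B i) (- A i) (edge_len w i))
      = - c * (\<Sum>i\<in>{i\<in>cotree. tgt i = x}. of_real (w i))"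
    unfolding sum_distrib_left by (intro sum.cong) auto
  have "(\<Sum>i\<in>{i\<in>tree. tgt i = x}. harmonic (B i) (- A i) (edge_len w i)) = (\<Sum>i\<in>{i\<in>tree. tgt i = x}. B i)"
    by (intro sum.cong) (auto simp: edge_len_def)
  then show ?thesis
    unfolding split sum.union_disjoint[OF finite disjoint] out into tree_div_def source_def
    by (simp add: algebra_simps)
qed

end

locale kirchhoff_flow = weighted_core_tree V N org tgt E0 root w
  for V :: "'v set" and N org tgt E0 root w +
  fixes \<beta> :: "nat \<Rightarrow> complex"
  assumes kirchhoff: "x \<in> core \<Longrightarrow> tree_div \<beta> x = - source w x"
begin

lemma eigfun_eigenpair: "eigenpair V N org tgt (edge_len w) 1 (eigfun w \<beta>)"
proof (rule eigenpair_harmonicI)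
  show "eigfun w \<beta> i = harmonic (amp_cos w i) (amp_sin w \<beta> i)" for i
    by (simp add: eigfun_def)
  show "\<exists>i<N. amp_cos w i \<noteq> 0"
    using amp_cos_nonzero edges_nonempty by blast
  show "\<forall>i<N. \<forall>m<N.
      (org i = org m \<longrightarrow> amp_cos w i = amp_cos w m) \<and>
      (org i = tgt m \<longrightarrow> amp_cos w i = harmonic (amp_cos w m) (amp_sin w \<beta> m) (edge_len w m)) \<and>
      (tgt i = tgt m \<longrightarrow> harmonic (amp_cos w i) (amp_sin w \<beta> i) (edge_len w i)
         = harmonic (amp_cos w m) (amp_sin w \<beta> m) (edge_len w m))"
    by (rule continuity_from_core) (use start_value end_value in auto)
  show "\<forall>v\<in>V. (\<Sum>i\<in>{i. i < N \<and> org i = v}. amp_sin w \<beta> i)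
      - (\<Sum>i\<in>{i. i < N \<and> tgt i = v}. harmonic (amp_sin w \<beta> i) (- amp_cos w i) (edge_len w i)) = 0"
  proof
    fix v assume "v \<in> V"
    show "(\<Sum>i\<in>{i. i < N \<and> org i = v}. amp_sin w \<beta> i)
      - (\<Sum>i\<in>{i. i < N \<and> tgt i = v}. harmonic (amp_sin w \<beta> i) (- amp_cos w i) (edge_len w i)) = 0"
    proof (cases "v \<in> core")
      case True
      have "tree_div (amp_sin w \<beta>) v = tree_div \<beta> v"
        by (rule tree_div_cong) (simp add: amp_sin_def)
      then show ?thesis
        using kirchhoff_sum_core[of "amp_cos w" 1 "amp_sin w \<beta>" \<beta> v] kirchhoff[OF True] True
        by (simp add: amp_cos_def)
    next
      case False
      then show ?thesis
        using start_slope_leaf end_slope_leaf by (simp add: sum.neutral)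
    qed
  qed
qed (rule edge_len_pos)

context
  fixes g :: "nat \<Rightarrow> real \<Rightarrow> complex"
  assumes g: "eigenpair V N org tgt (edge_len w) 1 g"
begin

lemma eigenpair_value_at_end:
  "i < N \<Longrightarrow> g i (edge_len w i) = harmonic (g i 0) (edge_deriv (edge_len w) g i 0) (edge_len w i)"
  "i < N \<Longrightarrow> edge_deriv (edge_len w) g i (edge_len w i)
     = harmonic (edge_deriv (edge_len w) g i 0) (- g i 0) (edge_len w i)"
  using eigenpair_harmonic[OF g, of i "edge_len w i"] edge_len_pos[of i] by simp_all

text \<open>Tree edges have length \<open>2 pi\<close>, so \<open>g\<close> has equal values at their two ends.\<close>
lemma eigenpair_constant_on_core:
  obtains a where "\<And>x. x \<in> core \<Longrightarrow> takes_value (edge_len w) g x a"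
proof -
  obtain i0 where i0: "i0 < N" "org i0 = root \<or> tgt i0 = root"
    using vertex_has_edge root core_subset_V by blast
  define a where "a = (if org i0 = root then g i0 0 else g i0 (edge_len w i0))"
  have "takes_value (edge_len w) g x a" if "x \<in> core" for x
    using that
  proof (induction rule: tree_induct)
    case root
    show ?case using eigenpair_takes_value[OF g i0(1)] i0(2) by (auto simp: a_def)
  next
    case (edge i)
    have i: "i < N" using tree_edge[OF edge] by blast
    have "g i 0 = g i (edge_len w i)"
      using eigenpair_value_at_end(1)[OF i] by (simp add: edge_len_def edge)
    then show ?case
      using takes_value_unique[OF eigenpair_takes_value(1)[OF g i] i]
        takes_value_unique[OF eigenpair_takes_value(2)[OF g i] i] by simp
  qed
  then show ?thesis using that by blast
qed

lemma eigenpair_cotree_coefficients: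
  assumes a: "\<And>x. x \<in> core \<Longrightarrow> takes_value (edge_len w) g x a" and i: "i \<in> cotree"
  shows "g i 0 = a * amp_cos w i \<and> edge_deriv (edge_len w) g i 0 = a * amp_sin w \<beta> i"
proof -
  have iN: "i < N" "i \<notin> tree" using i by (auto simp: cotree_def)
  let ?A = "g i 0" and ?B = "edge_deriv (edge_len w) g i 0" and ?L = "edge_len w i"
  have start: "?A = a" if "org i \<in> core" using a[OF that] iN by (simp add: takes_value_def)
  have "end": "harmonic ?A ?B ?L = a" if "tgt i \<in> core"
    using a[OF that] iN eigenpair_value_at_end(1)[of i] by (simp add: takes_value_def)
  from i show ?thesis
  proof (cases rule: cotree_cases)
    case chord
    then have core: "org i \<in> core" "tgt i \<in> core" and L: "?L = chord_length (w i)"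
      using iN by (auto simp: core_edges_def edge_len_def)
    have "harmonic a (a * of_real (w i)) ?L = a * of_real (cos ?L + w i * sin ?L)"
      by (simp add: harmonic_def algebra_simps)
    also have "\<dots> = a" using chord_length(3)[OF weights_nonzero[OF i]] L by simp
    finally have "harmonic a ?B ?L = harmonic a (a * of_real (w i)) ?L"
      using "end"[OF core(2)] start[OF core(1)] by simp
    then have "?B = a * of_real (w i)"
      by (rule harmonic_cancel(1)) (use chord_length(2)[OF weights_nonzero[OF i]] L in simp)
    then show ?thesis using start[OF core(1)] core iN by (simp add: amp_cos_def amp_sin_def)
  next
    case out
    have L: "?L = pendant_length (w i)" using out iN by (simp add: core_edges_def edge_len_def)
    have "deg (tgt i) = 1" using endpoint_leaf_or_core[OF iN(1)] out by blast
    then have "harmonic ?B (- a) ?L = 0"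
      using eigenpair_leaf_slope(2)[OF g iN(1)] eigenpair_value_at_end(2)[OF iN(1)] start[OF out(1)]
      by simp
    also have "0 = harmonic (a * of_real (w i)) (- a) ?L"
      using pendant_length(3)[of "w i"] L by (simp add: harmonic_def flip: of_real_mult)
    finally have "?B = a * of_real (w i)"
      by (rule harmonic_cancel(2)) (use pendant_length(2)[of "w i"] L in simp)
    then show ?thesis using start[OF out(1)] out iN by (simp add: amp_cos_def amp_sin_def)
  next
    case into
    have L: "?L = pendant_length (w i)" using into iN by (simp add: core_edges_def edge_len_def)
    have B: "?B = 0"
      using eigenpair_leaf_slope(1)[OF g iN(1)] endpoint_leaf_or_core[OF iN(1)] into by auto
    have "harmonic ?A 0 ?L = harmonic (a * of_real (1 / cos ?L)) 0 ?L"
      using "end"[OF into(2)] B pendant_length(2)[of "w i"] L by (simp add: harmonic_def)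
    then have "?A = a * of_real (1 / cos ?L)"
      by (rule harmonic_cancel(2)) (use pendant_length(2)[of "w i"] L in simp)
    then show ?thesis using B into iN by (simp add: amp_cos_def amp_sin_def)
  qed
qed

text \<open>Once \<open>g\<close> is matched with \<open>a\<close> times the candidate on the cotree, Kirchhoff's law at the core
  determines the tree slopes, because a flow on a tree is determined by its divergence.\<close>
lemma eigenpair_multiple_of_eigfun:
  "\<exists>c. \<forall>i<N. \<forall>t\<in>{0..edge_len w i}. g i t = c * eigfun w \<beta> i t"
proof -
  obtain a where a: "\<And>x. x \<in> core \<Longrightarrow> takes_value (edge_len w) g x a"
    using eigenpair_constant_on_core by blast
  define A B where "A i = g i 0" and "B i = edge_deriv (edge_len w) g i 0" for i
  have tree: "A i = a" if "i \<in> tree" for i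
    using a[of "org i"] tree_edge[OF that] by (simp add: takes_value_def A_def)
  have cotree: "A i = a * amp_cos w i \<and> B i = a * amp_sin w \<beta> i" if "i \<in> cotree" for i
    using eigenpair_cotree_coefficients[OF a that] by (simp add: A_def B_def)
  have "tree_div (\<lambda>i. B i - a * \<beta> i) x = 0" if x: "x \<in> core" for x
  proof -
    have "(\<Sum>i\<in>{i. i < N \<and> org i = x}. B i)
       - (\<Sum>i\<in>{i. i < N \<and> tgt i = x}. edge_deriv (edge_len w) g i (edge_len w i)) = 0"
      using g x core_subset_V unfolding eigenpair_def B_def by blast
    moreover have "(\<Sum>i\<in>{i. i < N \<and> tgt i = x}. edge_deriv (edge_len w) g i (edge_len w i))
      = (\<Sum>i\<in>{i. i < N \<and> tgt i = x}. harmonic (B i) (- A i) (edge_len w i))"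
      using eigenpair_value_at_end(2) unfolding A_def B_def by (intro sum.cong) auto
    ultimately have "(\<Sum>i\<in>{i. i < N \<and> org i = x}. B i)
       - (\<Sum>i\<in>{i. i < N \<and> tgt i = x}. harmonic (B i) (- A i) (edge_len w i)) = 0"
      by simp
    then show ?thesis
      using kirchhoff_sum_core[OF cotree tree x] kirchhoff[OF x] by (simp add: tree_div_diff tree_div_scale)
  qed
  then have "B i = a * \<beta> i" if "i \<in> tree" for i
    using tree_div_eq_0_imp[of "\<lambda>i. B i - a * \<beta> i" i] that by simp
  then have "A i = a * amp_cos w i \<and> B i = a * amp_sin w \<beta> i" if "i < N" for i
    using tree cotree tree_or_cotree[OF that] by (auto simp: amp_cos_def amp_sin_def)
  then have "g i t = a * eigfun w \<beta> i t" if "i < N" "t \<in> {0..edge_len w i}" for i t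
    using eigenpair_harmonic(1)[OF g that] that(1) unfolding A_def B_def eigfun_def
    by (simp add: harmonic_scale)
  then show ?thesis by blast
qed

end

lemma eigfun_simple: "simple_eigenpair V N org tgt (edge_len w) (1\<^sup>2) (eigfun w \<beta>)"
  using eigfun_eigenpair eigenpair_multiple_of_eigfun by (simp add: simple_eigenpair_def)

lemma eigfun_not_single_loop: "\<not> supported_on_single_loop N org tgt (edge_len w) (eigfun w \<beta>)"
proof
  assume "supported_on_single_loop N org tgt (edge_len w) (eigfun w \<beta>)"
  then obtain i where i: "\<forall>m<N. m \<noteq> i \<longrightarrow> (\<forall>t\<in>{0..edge_len w m}. eigfun w \<beta> m t = 0)"
    unfolding supported_on_single_loop_def by blast
  define m where "m = (if i = 0 then 1 else 0 :: nat)"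
  have "2 \<le> N" using two_le_N root by blast
  then have "m < N" "m \<noteq> i" by (auto simp: m_def)
  then have "eigfun w \<beta> m 0 = 0" using i edge_len_pos[of m] by auto
  then show False using amp_cos_nonzero[of m] by (simp add: eigfun_def)
qed

lemma eigfun_slopes:
  "edge_deriv (edge_len w) (eigfun w \<beta>) i 0 = amp_sin w \<beta> i"
  "edge_deriv (edge_len w) (eigfun w \<beta>) i (edge_len w i) = harmonic (amp_sin w \<beta> i) (- amp_cos w i) (edge_len w i)"
proof -
  have "edge_deriv (edge_len w) (eigfun w \<beta>) i t = harmonic (amp_sin w \<beta> i) (- amp_cos w i) t"
    if "t \<in> {0..edge_len w i}" for t
    by (rule edge_deriv_harmonic[of "edge_len w" i, OF edge_len_pos _ that]) (simp add: eigfun_def)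
  then show "edge_deriv (edge_len w) (eigfun w \<beta>) i 0 = amp_sin w \<beta> i"
    "edge_deriv (edge_len w) (eigfun w \<beta>) i (edge_len w i) = harmonic (amp_sin w \<beta> i) (- amp_cos w i) (edge_len w i)"
    using edge_len_pos[of i] by simp_all
qed

lemma trace_eigfun_nonzero:
  assumes j: "admissible_index N org tgt j"
    and tree_slope: "snd j \<in> tree \<Longrightarrow> fst j \<in> {CB, CD} \<Longrightarrow> \<beta> (snd j) \<noteq> 0"
  shows "trace_k (edge_len w) 1 (eigfun w \<beta>) j \<noteq> 0"
proof -
  obtain c i where j_eq: "j = (c, i)" by (cases j)
  have i: "i < N" using j by (simp add: admissible_index_def j_eq)
  show ?thesis
  proof (cases c)
    case CA
    then show ?thesis using amp_cos_nonzero by (simp add: trace_k_def j_eq eigfun_def)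
  next
    case CB
    have "amp_sin w \<beta> i \<noteq> 0"
    proof (cases "i \<in> tree")
      case True
      then show ?thesis using tree_slope CB by (simp add: amp_sin_def j_eq)
    next
      case False
      then have "i \<in> cotree" "org i \<in> core"
        using i j CB endpoint_leaf_or_core[OF i] by (auto simp: cotree_def admissible_index_def j_eq)
      then show ?thesis using start_slope_cotree weights_nonzero by simp
    qed
    then show ?thesis using CB by (simp add: trace_k_def j_eq eigfun_slopes)
  next
    case CC
    show ?thesis
      using end_value[OF i] end_value_leaf_nonzero[OF i] CC
      by (cases "tgt i \<in> core") (simp_all add: trace_k_def j_eq eigfun_def)
  next
    case CD
    have "harmonic (amp_sin w \<beta> i) (- amp_cos w i) (edge_len w i) \<noteq> 0"
    proof (cases "i \<in> tree")
      case True
      then show ?thesis using tree_slope CD end_slope_tree by (simp add: j_eq)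
    next
      case False
      then have "i \<in> cotree" "tgt i \<in> core"
        using i j CD endpoint_leaf_or_core[OF i] by (auto simp: cotree_def admissible_index_def j_eq)
      then show ?thesis using end_slope_cotree weights_nonzero by simp
    qed
    then show ?thesis using CD by (simp add: trace_k_def j_eq eigfun_slopes)
  qed
qed

lemma exists_eigenpair_with_trace:
  assumes "admissible_index N org tgt j"
    and "snd j \<in> tree \<Longrightarrow> fst j \<in> {CB, CD} \<Longrightarrow> \<beta> (snd j) \<noteq> 0"
  shows "\<exists>l k f. (\<forall>i<N. l i > 0) \<and> k > 0 \<and> simple_eigenpair V N org tgt l (k\<^sup>2) f \<and>
           \<not> supported_on_single_loop N org tgt l f \<and> trace_k l k f j \<noteq> 0"
  using edge_len_pos eigfun_simple eigfun_not_single_loop trace_eigfun_nonzero[OF assms]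
  by (intro exI[of _ "edge_len w"] exI[of _ 1] exI[of _ "eigfun w \<beta>"]) simp

end

context graph_A
begin

text \<open>The tree is chosen to avoid the edge of the index \<open>j\<close> unless that edge is a bridge of the core;
  in the bridge case the weights are chosen so that the flow through it does not vanish.\<close>
lemma exists_eigenpair_with_trace_core:
  assumes core: "core \<noteq> {}" and j: "admissible_index N org tgt j"
  shows "\<exists>l k f. (\<forall>i<N. l i > 0) \<and> k > 0 \<and> simple_eigenpair V N org tgt l (k\<^sup>2) f \<and>
           \<not> supported_on_single_loop N org tgt l f \<and> trace_k l k f j \<noteq> 0"
proof -
  define e where "e = snd j"
  define E0 where "E0 = (if connects_core (core_edges - {e}) then core_edges - {e} else core_edges)"
  obtain root where root: "root \<in> core" using core by blast
  interpret core_tree V N org tgt E0 root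
    using root connects_core_edges by unfold_locales (auto simp: E0_def)
  obtain w where w: "\<And>i. i \<in> cotree \<Longrightarrow> w i \<noteq> 0" "(\<Sum>x\<in>core. source w x) = 0"
    and bridge: "\<And>\<beta>. e \<in> tree \<Longrightarrow> (\<And>x. x \<in> core \<Longrightarrow> tree_div \<beta> x = - source w x) \<Longrightarrow> \<beta> e \<noteq> 0"
  proof (cases "e \<in> tree")
    case True
    then have "\<not> connects_core (core_edges - {e})"
      using tree_subset_E0 by (auto simp: E0_def)
    then show ?thesis using bridge_weights[OF True] that by metis
  next
    case False
    then show ?thesis using exists_balanced_weights that by metis
  qed
  have "(\<Sum>x\<in>core. - source w x) = 0" using w(2) by (simp add: sum_negf)
  then obtain \<beta> where \<beta>: "\<forall>x\<in>core. tree_div \<beta> x = - source w x"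
    using tree_div_surj by blast
  interpret kirchhoff_flow V N org tgt E0 root w \<beta>
    using w(1) \<beta> by unfold_locales auto
  show ?thesis
    using bridge \<beta> by (intro exists_eigenpair_with_trace[OF j]) (auto simp: e_def)
qed

text \<open>The witness is \<open>cos t\<close> on an edge of length \<open>pi\<close>, with vanishing slopes at both leaves.\<close>
lemma exists_eigenpair_with_trace_single_edge:
  assumes core: "core = {}" and j: "admissible_index N org tgt j"
  shows "\<exists>l k f. (\<forall>i<N. l i > 0) \<and> k > 0 \<and> simple_eigenpair V N org tgt l (k\<^sup>2) f \<and>
           \<not> supported_on_single_loop N org tgt l f \<and> trace_k l k f j \<noteq> 0"
proof -
  note edge = single_edge[OF core]
  define l :: "nat \<Rightarrow> real" where "l i = pi" for i
  define f where "f i = harmonic 1 0" for i :: nat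
  have N: "i < N \<longleftrightarrow> i = 0" for i using edge(1) by auto
  have eigenpair: "eigenpair V N org tgt l 1 f"
  proof (rule eigenpair_harmonicI[where A = "\<lambda>_. 1" and B = "\<lambda>_. 0"])
    show "\<forall>i<N. \<forall>m<N. (org i = org m \<longrightarrow> 1 = 1) \<and> (org i = tgt m \<longrightarrow> 1 = harmonic 1 0 (l m)) \<and>
        (tgt i = tgt m \<longrightarrow> harmonic 1 0 (l i) = harmonic 1 0 (l m))"
      using edge(2) by (simp add: N)
    show "\<forall>v\<in>V. (\<Sum>i\<in>{i. i < N \<and> org i = v}. 0) - (\<Sum>i\<in>{i. i < N \<and> tgt i = v}. harmonic 0 (- 1) (l i)) = 0"
      by (simp add: harmonic_def l_def)
  qed (use edges_nonempty in \<open>auto simp: l_def f_def\<close>)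
  have "\<forall>i<N. \<forall>t\<in>{0..l i}. g i t = g 0 0 * f i t" if g: "eigenpair V N org tgt l 1 g" for g
  proof (intro allI impI ballI)
    fix i t assume "i < N" "t \<in> {0..l i}"
    then have "i = 0" "g i t = harmonic (g 0 0) (edge_deriv l g 0 0) t"
      using eigenpair_harmonic(1)[OF g \<open>i < N\<close> \<open>t \<in> {0..l i}\<close>] N by simp_all
    then show "g i t = g 0 0 * f i t"
      using eigenpair_leaf_slope(1)[OF g edges_nonempty edge(3)] by (simp add: f_def harmonic_def)
  qed
  then have "simple_eigenpair V N org tgt l (1\<^sup>2) f"
    using eigenpair unfolding simple_eigenpair_def power_one by blast
  moreover have "\<not> supported_on_single_loop N org tgt l f"
    using edge(2) by (simp add: supported_on_single_loop_def N)
  moreover have "trace_k l 1 f j \<noteq> 0"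
  proof -
    obtain c i where j_eq: "j = (c, i)" by (cases j)
    then have "i = 0" "c = CA \<or> c = CC" using j edge(3,4) by (auto simp: admissible_index_def N intro: coeff.exhaust)
    then show ?thesis by (auto simp: trace_k_def j_eq f_def l_def harmonic_def)
  qed
  ultimately show ?thesis
    by (intro exI[of _ l] exI[of _ 1] exI[of _ f]) (simp add: l_def)
qed

end

theorem mainTheorem16:
  fixes V :: "'v set" and N :: nat and org tgt :: "nat \<Rightarrow> 'v" and j :: "coeff \<times> nat"
  assumes "assumption_A V N org tgt"
    and "admissible_index N org tgt j"
  shows "\<exists>l k f. (\<forall>i<N. l i > 0) \<and> k > 0 \<and>
           simple_eigenpair V N org tgt l (k\<^sup>2) f \<and>
           \<not> supported_on_single_loop N org tgt l f \<and>
           trace_k l k f j \<noteq> 0"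
proof -
  have "0 < N" using assms(2) by (simp add: admissible_index_def)
  with assms(1) interpret graph_A V N org tgt by unfold_locales
  show ?thesis
    using exists_eigenpair_with_trace_core[OF _ assms(2)]
      exists_eigenpair_with_trace_single_edge[OF _ assms(2)] by blast
qed

end
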